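(* Let $n,k\geq 1$ and let ${\bf m}=(m_1,\dots,m_k)$ be an array of nonnegative integers. For every permutation $\tau\in\mathfrak{S}_k$ there exists a bijection $\Phi_k:\mathcal{A}_n^k({\bf m})\to\mathcal{A}_n^k({\bf m}')$, where ${\bf m}'=(m_{\tau(1)},m_{\tau(2)},\dots,m_{\tau(k)})$, such that for every $\mathfrak{a}\in\mathcal{A}_n^k({\bf m})$, $$\bigl(\mathrm{DEZ}(\mathfrak{a}),\mathrm{Der}(\mathfrak{a})\bigr)=\bigl(\mathrm{DES}(\Phi_k(\mathfrak{a})),\mathrm{Der}(\Phi_k(\mathfrak{a}))\bigr).$$
   Context: $[n]=\{1,\dots,n\}$ and $\mathfrak{S}_n$ is the set of permutations of $[n]$, written in one-line notation $\pi=\pi(1)\cdots\pi(n)$; $\mathrm{FIX}(\pi)=\{i:\pi(i)=i\}$. For an integer $k\ge 1$, a $k$-arrangement of $[n]$ is a pair $\mathfrak{a}=(\pi,\phi)$ with $\pi\in\mathfrak{S}_n$ and $\phi:\mathrm{FIX}(\pi)\to\{-1,-2,\dots,-k\}$ an arbitrary function; $\mathcal{A}_n^k$ is the set of them. The positive reduction $\mathrm{red}^+(w)$ of a word $w$ over the integers is obtained by replacing every occurrence of the $i$-th smallest positive letter of $w$ by $i$, for all $i$ (negative letters are unchanged). The derangement form $\mathrm{df}_k(\mathfrak{a})$ is the word obtained from $\pi(1)\cdots\pi(n)$ by replacing $\pi(i)$ with $\phi(i)$ for each $i\in\mathrm{FIX}(\pi)$ and then applying positive reduction. The permutation form $\mathrm{pf}_k(\mathfrak{a})$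 is obtained in the same way, except that $\pi(i)$ is replaced by $\phi(i)$ only for those $i\in\mathrm{FIX}(\pi)$ with $\phi(i)\neq -k$. For a word $w=w_1\cdots w_n$ over the integers, $\mathrm{DES}(w)=\{i\in[n-1]:w_i>w_{i+1}\}$ and $\mathrm{Pos}(w)$ is the subword of $w$ consisting of its positive letters. For $\mathfrak{a}\in\mathcal{A}_n^k$ set $\mathrm{DES}(\mathfrak{a})=\mathrm{DES}(\mathrm{pf}_k(\mathfrak{a}))$, $\mathrm{DEZ}(\mathfrak{a})=\mathrm{DES}(\mathrm{df}_k(\mathfrak{a}))$, $\mathrm{Der}(\mathfrak{a})=\mathrm{Pos}(\mathrm{df}_k(\mathfrak{a}))$, and $\mathrm{fix}_i(\mathfrak{a})=|\{j\in\mathrm{FIX}(\pi):\phi(j)=-i\}|$. For ${\bf m}=(m_1,\dots,m_k)$, $\mathcal{A}_n^k({\bf m})=\{\mathfrak{a}\in\mathcal{A}_n^k:\mathrm{fix}_i(\mathfrak{a})=m_i\text{ for }1\le i\le k\}$. *)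

theory Defs
  imports "HOL-Combinatorics.Permutations"
begin

text \<open>A k-arrangement of [n] is a pair (pi, phi): pi permutes {1..n} (and is the identity
  elsewhere); phi assigns to each fixed point i in {1..n} a value in {-k..-1}.
  To make the representation unique, phi is required to be 0 at every non-fixed point.\<close>

type_synonym arrangement = "(nat \<Rightarrow> nat) \<times> (nat \<Rightarrow> int)"

definition FIX :: "nat \<Rightarrow> (nat \<Rightarrow> nat) \<Rightarrow> nat set" where
  "FIX n \<pi> = {i \<in> {1..n}. \<pi> i = i}"

definition arrangements :: "nat \<Rightarrow> nat \<Rightarrow> arrangement set" where
  "arrangements n k = {(\<pi>, \<phi>). \<pi> permutes {1..n} \<and>
      (\<forall>i. if i \<in> FIX n \<pi> then \<phi> i \<in> {- int k .. -1} else \<phi> i = 0)}"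

definition red_pos :: "int list \<Rightarrow> int list" where
  "red_pos w = map (\<lambda>x. if 0 < x then int (card {y \<in> set w. 0 < y \<and> y < x}) + 1 else x) w"

definition df :: "nat \<Rightarrow> nat \<Rightarrow> arrangement \<Rightarrow> int list" where
  "df n k a = red_pos (map (\<lambda>i. if i \<in> FIX n (fst a) then snd a i else int (fst a i)) [1..<n+1])"

definition pf :: "nat \<Rightarrow> nat \<Rightarrow> arrangement \<Rightarrow> int list" where
  "pf n k a = red_pos (map (\<lambda>i. if i \<in> FIX n (fst a) \<and> snd a i \<noteq> - int k
                                then snd a i else int (fst a i)) [1..<n+1])"

text \<open>Descent set of a word w_1...w_n, positions 1-indexed.\<close>
definition DES_word :: "int list \<Rightarrow> nat set" where
  "DES_word w = {i. 1 \<le> i \<and> i < length w \<and> w ! (i - 1) > w ! i}"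

definition Pos :: "int list \<Rightarrow> int list" where
  "Pos w = filter (\<lambda>x. 0 < x) w"

definition DES :: "nat \<Rightarrow> nat \<Rightarrow> arrangement \<Rightarrow> nat set" where
  "DES n k a = DES_word (pf n k a)"

definition DEZ :: "nat \<Rightarrow> nat \<Rightarrow> arrangement \<Rightarrow> nat set" where
  "DEZ n k a = DES_word (df n k a)"

definition Der :: "nat \<Rightarrow> nat \<Rightarrow> arrangement \<Rightarrow> int list" where
  "Der n k a = Pos (df n k a)"

definition fixi :: "nat \<Rightarrow> nat \<Rightarrow> arrangement \<Rightarrow> nat" where
  "fixi n i a = card {j \<in> FIX n (fst a). snd a j = - int i}"

text \<open>m is indexed by 1..k (values outside are irrelevant).\<close>
definition arrangements_m :: "nat \<Rightarrow> nat \<Rightarrow> (nat \<Rightarrow> nat) \<Rightarrow> arrangement set" where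
  "arrangements_m n k m = {a \<in> arrangements n k. \<forall>i\<in>{1..k}. fixi n i a = m i}"

end

theory Submission
  imports Defs
begin

(*
  An arrangement is determined by its label word w = phi(1) ... phi(n), which has 0 at the
  non-fixed points, together with its reduced derangement word D = Der.  The derangement form
  is w with its zeros filled by the letters of D in order; the permutation form has the same
  descents as w with every zero and every letter -k that is preceded by r zeros filled by
  2 D(r) and 2r + 1 respectively.

  Fix D and a set S.  A word has all its descents in S iff every block of the composition of n
  cut at S is sorted after filling, and a sorted block is determined by its multiset of letters
  (on the permutation side the letters -k are forced into one slot).  Relabelling the negative
  letters by tau block by block therefore matches the words with DEZ in S and the words with DES
  in S, permuting the fixed-point statistics by tau.  Inclusion-exclusion over S turns this into
  equal counts for DEZ = S and DES = S, so the fibres of (DEZ, Der) and (DES, Der) have equal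
  sizes, which yields the bijection.
*)

section \<open>Counting\<close>

lemma bij_betw_if_card_fibres_eq:
  assumes "finite A" "finite B"
    and fibres: "\<And>y. card {a\<in>A. f a = y} = card {b\<in>B. g b = y}"
  shows "\<exists>h. bij_betw h A B \<and> (\<forall>a\<in>A. g (h a) = f a)"
proof -
  have "\<forall>y. \<exists>h. bij_betw h {a\<in>A. f a = y} {b\<in>B. g b = y}"
    by (intro allI finite_same_card_bij) (use assms in auto)
  then obtain H where H: "\<And>y. bij_betw (H y) {a\<in>A. f a = y} {b\<in>B. g b = y}"
    by metis
  define h where "h a = H (f a) a" for a
  have maps: "h a \<in> B \<and> g (h a) = f a" if "a \<in> A" for a
    using bij_betwE[OF H[of "f a"]] that unfolding h_def by blast
  have "inj_on h A"
  proof (rule inj_onI)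
    fix a a' assume a: "a \<in> A" "a' \<in> A" "h a = h a'"
    then have "f a = f a'" using maps by metis
    with a show "a = a'"
      using bij_betw_imp_inj_on[OF H[of "f a"]] unfolding h_def by (auto dest: inj_onD)
  qed
  moreover have "B \<subseteq> h ` A"
  proof
    fix b assume "b \<in> B"
    then obtain a where "a \<in> A" "f a = g b" "b = H (g b) a"
      using bij_betw_imp_surj_on[OF H[of "g b"]] by blast
    then show "b \<in> h ` A" unfolding h_def by force
  qed
  ultimately show ?thesis using maps unfolding bij_betw_def by blast
qed

lemma card_fibres_eq_if_card_lower_fibres_eq:
  assumes "finite A" "finite B"
    and "\<And>a. a \<in> A \<Longrightarrow> finite (f a)" "\<And>b. b \<in> B \<Longrightarrow> finite (g b)"
    and lower: "\<And>T. card {a\<in>A. f a \<subseteq> T} = card {b\<in>B. g b \<subseteq> T}"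
  shows "card {a\<in>A. f a = S} = card {b\<in>B. g b = S}"
proof -
  have split: "card {x\<in>X. h x \<subseteq> T} = card {x\<in>X. h x = T} + (\<Sum>U\<in>Pow T - {T}. card {x\<in>X. h x = U})"
    if "finite X" "finite T" for X and h :: "_ \<Rightarrow> 'c set" and T
  proof -
    have "{x\<in>X. h x \<subseteq> T} = (\<Union>U\<in>Pow T. {x\<in>X. h x = U})" by auto
    also have "card \<dots> = (\<Sum>U\<in>Pow T. card {x\<in>X. h x = U})"
      by (rule card_UN_disjoint) (use that in auto)
    finally show ?thesis using sum.remove[of "Pow T" T] that(2) by simp
  qed
  show ?thesis
  proof (cases "finite S")
    case False
    then have "{a\<in>A. f a = S} = {}" "{b\<in>B. g b = S} = {}" using assms(3,4) by auto
    then show ?thesis by (simp only: card.empty)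
  next
    case True
    then show ?thesis
    proof (induction "card S" arbitrary: S rule: less_induct)
      case less
      have "card {a\<in>A. f a = U} = card {b\<in>B. g b = U}" if "U \<in> Pow S - {S}" for U
      proof -
        have "U \<subset> S" using that by auto
        then show ?thesis
          using less.hyps less.prems by (meson psubset_card_mono finite_subset psubset_imp_subset)
      qed
      then have "(\<Sum>U\<in>Pow S - {S}. card {a\<in>A. f a = U}) = (\<Sum>U\<in>Pow S - {S}. card {b\<in>B. g b = U})"
        by (rule sum.cong[OF refl])
      then show ?case
        using lower[of S] split[OF \<open>finite A\<close> less.prems] split[OF \<open>finite B\<close> less.prems] by simp
    qed
  qed
qed

lemma bij_betw_restrict_Collect:
  assumes "bij_betw h X Y" "\<And>x. x \<in> X \<Longrightarrow> P x \<longleftrightarrow> Q (h x)"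
  shows "bij_betw h {x\<in>X. P x} {y\<in>Y. Q y}"
  using assms unfolding bij_betw_def inj_on_def by auto

section \<open>Descents of words\<close>

lemma DES_word_subset: "DES_word w \<subseteq> {1..<length w}"
  unfolding DES_word_def by auto

lemma finite_DES_word: "finite (DES_word w)"
  using DES_word_subset finite_subset by blast

lemma DES_word_eq_empty_iff: "DES_word w = {} \<longleftrightarrow> sorted w"
proof -
  have "DES_word w = Suc ` {j. Suc j < length w \<and> w ! j > w ! Suc j}"
  proof (intro equalityI subsetI)
    fix i assume "i \<in> DES_word w"
    then have "i = Suc (i - 1)" "Suc (i - 1) < length w" "w ! (i - 1) > w ! Suc (i - 1)"
      unfolding DES_word_def by auto
    then show "i \<in> Suc ` {j. Suc j < length w \<and> w ! j > w ! Suc j}" by blast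
  qed (auto simp: DES_word_def)
  then show ?thesis unfolding sorted_iff_nth_Suc
    by (metis (no_types, lifting) empty_Collect_eq image_is_empty not_le)
qed

lemma DES_word_append:
  "DES_word (xs @ ys) - {length xs} = DES_word xs \<union> (+) (length xs) ` DES_word ys"
proof (intro equalityI subsetI)
  fix i assume "i \<in> DES_word (xs @ ys) - {length xs}"
  then have i: "1 \<le> i" "i < length xs + length ys" "i \<noteq> length xs"
    and des: "(xs @ ys) ! (i - 1) > (xs @ ys) ! i"
    unfolding DES_word_def by auto
  show "i \<in> DES_word xs \<union> (+) (length xs) ` DES_word ys"
  proof (cases "i < length xs")
    case True
    moreover have "i - 1 < length xs" using True by simp
    ultimately have "i \<in> DES_word xs" using i des unfolding DES_word_def by (simp add: nth_append)
    then show ?thesis by blast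
  next
    case False
    then have "\<not> i - 1 < length xs" "i - 1 - length xs = i - length xs - 1" using i by auto
    then have "i - length xs \<in> DES_word ys" "i = length xs + (i - length xs)"
      using False i des unfolding DES_word_def by (auto simp: nth_append)
    then show ?thesis by blast
  qed
next
  fix i assume "i \<in> DES_word xs \<union> (+) (length xs) ` DES_word ys"
  then show "i \<in> DES_word (xs @ ys) - {length xs}"
  proof
    assume "i \<in> DES_word xs"
    then show ?thesis unfolding DES_word_def by (auto simp: nth_append)
  next
    assume "i \<in> (+) (length xs) ` DES_word ys"
    then obtain j where "i = length xs + j" "1 \<le> j" "j < length ys" "ys ! (j - 1) > ys ! j"
      unfolding DES_word_def by auto
    then show ?thesis unfolding DES_word_def by (auto simp: nth_append)
  qed
qed

lemma DES_word_append_subset_iff: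
  assumes "xs \<noteq> []"
  shows "DES_word (xs @ ys) \<subseteq> insert (length xs) ((+) (length xs) ` T)
     \<longleftrightarrow> sorted xs \<and> DES_word ys \<subseteq> T"
proof -
  have "DES_word (xs @ ys) \<subseteq> insert (length xs) ((+) (length xs) ` T)
      \<longleftrightarrow> DES_word xs \<union> (+) (length xs) ` DES_word ys \<subseteq> insert (length xs) ((+) (length xs) ` T)"
    using DES_word_append[of xs ys] by blast
  also have "\<dots> \<longleftrightarrow> DES_word xs = {} \<and> DES_word ys \<subseteq> T"
    using DES_word_subset[of xs] DES_word_subset[of ys] assms
      by (fastforce simp: inj_image_subset_iff)
  finally show ?thesis by (simp add: DES_word_eq_empty_iff)
qed

lemma DES_word_map:
  assumes "\<And>x y. x \<in> set w \<Longrightarrow> y \<in> set w \<Longrightarrow> h x > h y \<longleftrightarrow> x > y"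
  shows "DES_word (map h w) = DES_word w"
  unfolding DES_word_def using assms by auto

lemma DES_word_red_pos: "DES_word (red_pos w) = DES_word w"
  unfolding red_pos_def
proof (rule DES_word_map)
  fix x y assume "x \<in> set w" "y \<in> set w"
  define h where "h x = int (card {z \<in> set w. 0 < z \<and> z < x})" for x
  have "h a \<le> h b" if "a \<le> b" for a b
    unfolding h_def using that by (simp add: card_mono subset_iff)
  moreover have "h a < h b" if "a < b" "0 < a" "a \<in> set w" for a b
  proof -
    have "{z \<in> set w. 0 < z \<and> z < a} \<subset> {z \<in> set w. 0 < z \<and> z < b}" using that by auto
    then show ?thesis unfolding h_def by (simp add: psubset_card_mono)
  qed
  moreover have "0 \<le> h a" for a unfolding h_def by simp
  ultimately show "(if 0 < x then h x + 1 else x) > (if 0 < y then h y + 1 else y) \<longleftrightarrow> x > y"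
    using \<open>x \<in> set w\<close> \<open>y \<in> set w\<close> unfolding h_def[symmetric]
    by (smt (verit))
qed

lemma DES_word_map_mono:
  fixes g :: "int \<Rightarrow> int"
  assumes "\<And>x y. x \<le> y \<Longrightarrow> g x \<le> g y"
    and "\<And>i. Suc i < length w \<Longrightarrow> w ! i > w ! Suc i \<Longrightarrow> g (w ! i) > g (w ! Suc i)"
  shows "DES_word (map g w) = DES_word w"
proof -
  have "g (w ! (i - 1)) > g (w ! i) \<longleftrightarrow> w ! (i - 1) > w ! i" if "1 \<le> i" "i < length w" for i
  proof
    assume "g (w ! (i - 1)) > g (w ! i)"
    then show "w ! (i - 1) > w ! i" using assms(1)[of "w ! (i - 1)" "w ! i"] by linarith
  qed (use assms(2)[of "i - 1"] that in simp)
  then show ?thesis unfolding DES_word_def by auto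
qed

fun cuts :: "nat list \<Rightarrow> nat set" where
  "cuts [] = {}"
| "cuts (l # ls) = insert l ((+) l ` cuts ls)"

lemma composition_with_cuts:
  assumes "1 \<le> n" "S \<subseteq> {1..<n}"
  shows "\<exists>ls. (\<forall>l\<in>set ls. 0 < l) \<and> sum_list ls = n \<and> cuts ls = insert n S"
  using assms
proof (induction n arbitrary: S rule: less_induct)
  case (less n)
  show ?case
  proof (cases "S = {}")
    case True
    then show ?thesis using less.prems by (intro exI[of _ "[n]"]) auto
  next
    case False
    define s where "s = Min S"
    have "finite S" using less.prems finite_subset by blast
    then have s: "s \<in> S" "\<And>x. x \<in> S \<Longrightarrow> s \<le> x" using False unfolding s_def by auto
    then have "1 \<le> s" "s < n" using less.prems by auto
    define S' where "S' = (\<lambda>x. x - s) ` (S - {s})"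
    have "S' \<subseteq> {1..<n - s}" unfolding S'_def using s less.prems by force
    moreover have "n - s < n" "1 \<le> n - s" using \<open>1 \<le> s\<close> \<open>s < n\<close> by auto
    ultimately obtain ls where ls: "\<forall>l\<in>set ls. 0 < l" "sum_list ls = n - s"
      "cuts ls = insert (n - s) S'"
      using less.IH by blast
    have "(+) s ` S' = S - {s}"
      unfolding S'_def image_image using s(2) by (force simp: image_iff)
    then have "cuts (s # ls) = insert n S" using ls s(1) \<open>s < n\<close> by auto
    then show ?thesis using ls \<open>1 \<le> s\<close> \<open>s < n\<close> by (intro exI[of _ "s # ls"]) auto
  qed
qed

section \<open>Filling the zeros of a word\<close>

primrec fill :: "(nat \<Rightarrow> int \<Rightarrow> int) \<Rightarrow> nat \<Rightarrow> int list \<Rightarrow> int list" where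
  "fill f r [] = []"
| "fill f r (x # xs) = f r x # fill f (if x = 0 then Suc r else r) xs"

lemma length_fill [simp]: "length (fill f r xs) = length xs"
  by (induction xs arbitrary: r) auto

lemma fill_append: "fill f r (xs @ ys) = fill f r xs @ fill f (r + count_list xs 0) ys"
  by (induction xs arbitrary: r) auto

lemma nth_fill: "j < length w \<Longrightarrow> fill f r w ! j = f (r + count_list (take j w) 0) (w ! j)"
  by (induction w arbitrary: j r) (auto simp: nth_Cons split: nat.split)

lemma fill_replicate_zero: "fill f r (replicate z 0) = map (\<lambda>i. f i 0) [r..<r+z]"
  by (induction z arbitrary: r) (auto simp: upt_rec)

lemma fill_no_zero: "0 \<notin> set xs \<Longrightarrow> fill f r xs = map (f r) xs"
  by (induction xs) auto

fun blocks_sorted :: "(nat \<Rightarrow> int \<Rightarrow> int) \<Rightarrow> nat \<Rightarrow> nat list \<Rightarrow> int list \<Rightarrow> bool" where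
  "blocks_sorted f r [] w \<longleftrightarrow> w = []"
| "blocks_sorted f r (l # ls) w \<longleftrightarrow> sorted (fill f r (take l w))
     \<and> blocks_sorted f (r + count_list (take l w) 0) ls (drop l w)"

lemma DES_word_fill_subset_cuts_iff:
  "length w = sum_list ls \<Longrightarrow> \<forall>l\<in>set ls. 0 < l \<Longrightarrow>
     DES_word (fill f r w) \<subseteq> cuts ls \<longleftrightarrow> blocks_sorted f r ls w"
proof (induction ls arbitrary: r w)
  case Nil
  then show ?case using DES_word_subset[of "fill f r w"] by auto
next
  case (Cons l ls)
  have split: "fill f r w = fill f r (take l w) @ fill f (r + count_list (take l w) 0) (drop l w)"
    by (metis append_take_drop_id fill_append)
  have len: "length (fill f r (take l w)) = l" using Cons.prems(1) by simp
  moreover have "0 < l" using Cons.prems(2) by simp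
  ultimately have "fill f r (take l w) \<noteq> []" by (metis length_greater_0_conv)
  from DES_word_append_subset_iff[OF this] show ?case
    unfolding split len using Cons.IH[of "drop l w"] Cons.prems by simp
qed

lemma blocks_sorted_iff_DES_word_subset:
  assumes "1 \<le> n"
  obtains ls where "sum_list ls = n"
    "\<And>f w. length w = n \<Longrightarrow> DES_word (fill f 0 w) \<subseteq> S \<longleftrightarrow> blocks_sorted f 0 ls w"
proof -
  obtain ls where ls: "\<forall>l\<in>set ls. 0 < l" "sum_list ls = n" "cuts ls = insert n (S \<inter> {1..<n})"
    using composition_with_cuts[OF assms, of "S \<inter> {1..<n}"] by auto
  have "DES_word (fill f 0 w) \<subseteq> S \<longleftrightarrow> blocks_sorted f 0 ls w" if "length w = n" for f w
  proof -
    have "DES_word (fill f 0 w) \<subseteq> {1..<n}" using DES_word_subset[of "fill f 0 w"] that by simp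
    then have "DES_word (fill f 0 w) \<subseteq> S \<longleftrightarrow> DES_word (fill f 0 w) \<subseteq> cuts ls"
      unfolding ls(3) by auto
    also have "\<dots> \<longleftrightarrow> blocks_sorted f 0 ls w"
      using DES_word_fill_subset_cuts_iff ls(1,2) that by simp
    finally show ?thesis .
  qed
  with ls(2) show ?thesis using that by blast
qed

fun map_blocks :: "(nat \<Rightarrow> int list \<Rightarrow> int list) \<Rightarrow> nat \<Rightarrow> nat list \<Rightarrow> int list \<Rightarrow> int list" where
  "map_blocks T r [] w = []"
| "map_blocks T r (l # ls) w = T r (take l w)
  @ map_blocks T (r + count_list (take l w) 0) ls (drop l w)"

lemma count_image_mset_zero:
  "(\<And>x. x \<in> set p \<Longrightarrow> h x = 0 \<longleftrightarrow> x = 0) \<Longrightarrow> count (image_mset h (mset p)) 0 = count_list p 0"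
  by (induction p) auto

lemma map_blocks_transfer:
  assumes block: "\<And>r p. set p \<subseteq> A \<Longrightarrow> r + count_list p 0 \<le> N \<Longrightarrow> sorted (fill f r p) \<Longrightarrow>
      mset (T r p) = image_mset h (mset p) \<and> sorted (fill g r (T r p)) \<and> T' r (T r p) = p"
    and zero: "\<And>x. x \<in> A \<Longrightarrow> h x = 0 \<longleftrightarrow> x = 0"
  shows "length w = sum_list ls \<Longrightarrow> set w \<subseteq> A \<Longrightarrow> r + count_list w 0 \<le> N \<Longrightarrow>
     blocks_sorted f r ls w \<Longrightarrow>
     mset (map_blocks T r ls w) = image_mset h (mset w) \<and> blocks_sorted g r ls (map_blocks T r ls w)
       \<and> map_blocks T' r ls (map_blocks T r ls w) = w"
proof (induction ls arbitrary: r w)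
  case Nil
  then show ?case by simp
next
  case (Cons l ls)
  define p where "p = take l w"
  define w' where "w' = drop l w"
  have w: "w = p @ w'" unfolding p_def w'_def by simp
  have cw: "count_list w 0 = count_list p 0 + count_list w' 0" unfolding w by simp
  have p: "set p \<subseteq> A" "r + count_list p 0 \<le> N" "sorted (fill f r p)"
    using Cons.prems cw set_take_subset[of l w] unfolding p_def by auto
  note Tp = block[OF p]
  have "count_list (T r p) 0 = count_list p 0" "length (T r p) = length p"
    using Tp count_image_mset_zero[of p h] zero p(1)
    by (metis count_mset subsetD) (metis Tp size_image_mset size_mset)
  moreover have "length p = l" using Cons.prems(1) unfolding p_def by simp
  moreover have "mset (map_blocks T (r + count_list p 0) ls w') = image_mset h (mset w')
     \<and> blocks_sorted g (r + count_list p 0) ls (map_blocks T (r + count_list p 0) ls w')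
     \<and> map_blocks T' (r + count_list p 0) ls (map_blocks T (r + count_list p 0) ls w') = w'"
    using Cons.IH[of w' "r + count_list p 0"] Cons.prems cw set_drop_subset[of l w]
    unfolding w'_def p_def by auto
  ultimately show ?case using Tp unfolding w by (simp add: p_def)
qed

definition df_letter :: "int list \<Rightarrow> nat \<Rightarrow> int \<Rightarrow> int" where
  "df_letter D r x = (if x = 0 then D ! r else x)"

(* A fixed point i labelled -k keeps its value i in the permutation form.  Among the positive
   letters it lies between the non-fixed values of ranks r and r + 1, r being the number of
   non-fixed points before i; doubling the ranks leaves the odd value 2r + 1 for it. *)
definition pf_letter :: "nat \<Rightarrow> int list \<Rightarrow> nat \<Rightarrow> int \<Rightarrow> int" where
  "pf_letter k D r x = (if x = 0 then 2 * D ! r else if x = - int k then 2 * int r + 1 else x)"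

definition df_block :: "int multiset \<Rightarrow> int list" where
  "df_block M = sorted_list_of_multiset (filter_mset (\<lambda>x. x \<noteq> 0) M) @ replicate (count M 0) 0"

(* In a sorted block filled by pf_letter, the letters -k come right after the zeros i with
   D ! i < i + 1 and before the others; on an increasing stretch of D these zeros form an
   initial segment, of length slot D r z. *)
definition slot :: "int list \<Rightarrow> nat \<Rightarrow> nat \<Rightarrow> nat" where
  "slot D r z = length (filter (\<lambda>i. D ! i < int (Suc i)) [r..<r+z])"

definition pf_block :: "nat \<Rightarrow> int list \<Rightarrow> nat \<Rightarrow> int multiset \<Rightarrow> int list" where
  "pf_block k D r M = (let s = slot D r (count M 0) in
     sorted_list_of_multiset (filter_mset (\<lambda>x. x \<noteq> 0 \<and> x \<noteq> - int k) M)
     @ replicate s 0 @ replicate (count M (- int k)) (- int k) @ replicate (count M 0 - s) 0)"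

lemma sorted_sign_partition:
  "length xs = length p \<Longrightarrow> sorted xs \<Longrightarrow> \<forall>j<length p. xs ! j < 0 \<longleftrightarrow> P (p ! j) \<Longrightarrow>
     p = filter P p @ filter (\<lambda>x. \<not> P x) p"
proof (induction xs p rule: list_induct2)
  case (Cons y xs x p)
  show ?case
  proof (cases "P x")
    case True
    have "\<forall>j<length p. xs ! j < 0 \<longleftrightarrow> P (p ! j)"
      using Cons.prems(2) by (metis Suc_less_eq nth_Cons_Suc length_Cons)
    then show ?thesis using True Cons by simp
  next
    case False
    then have "0 \<le> y" using Cons.prems(2)[rule_format, of 0] by simp
    have "\<not> P (p ! j)" if "j < length p" for j
    proof -
      have "y \<le> xs ! j" using Cons.prems(1) Cons.hyps that by (simp add: nth_mem)
      then show ?thesis using \<open>0 \<le> y\<close> Cons.prems(2)[rule_format, of "Suc j"] Cons.hyps that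
        by (simp add: leD order_trans)
    qed
    then have "\<forall>x\<in>set p. \<not> P x" by (metis in_set_conv_nth)
    then show ?thesis using False by simp
  qed
qed simp

lemma count_list_take_less: "j < length p \<Longrightarrow> count_list (take j p) (p ! j) < count_list p (p ! j)"
proof -
  assume j: "j < length p"
  have "count_list p (p ! j) = count_list (take j p @ p ! j # drop (Suc j) p) (p ! j)"
    using id_take_nth_drop[OF j] by (rule arg_cong)
  also have "\<dots> = count_list (take j p) (p ! j) + Suc (count_list (drop (Suc j) p) (p ! j))"
    by simp
  finally show ?thesis by linarith
qed

lemma sorted_list_of_multiset_filter_mset:
  "sorted_list_of_multiset (filter_mset P (mset xs)) = sort (filter P xs)"
  by (simp flip: mset_filter add: sorted_list_of_multiset_mset)

lemma count_list_replicate [simp]: "count_list (replicate n x) y = (if x = y then n else 0)"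
  by (induction n) auto

lemma count_list_filter: "count_list (filter P xs) y = (if P y then count_list xs y else 0)"
  by (induction xs) auto

lemma slot_le: "slot D r z \<le> z"
  unfolding slot_def using length_filter_le[of _ "[r..<r+z]"] by simp

lemma slot_Suc_left: "slot D r (Suc z) = (if D ! r < int (Suc r) then 1 else 0) + slot D (Suc r) z"
  unfolding slot_def by (simp add: upt_conv_Cons del: upt_Suc)

lemma filter_upt_downward_closed:
  assumes "\<And>i j. r \<le> i \<Longrightarrow> i \<le> j \<Longrightarrow> j < r + z \<Longrightarrow> P j \<Longrightarrow> P i"
  shows "r \<le> i \<Longrightarrow> i < r + z \<Longrightarrow> P i \<longleftrightarrow> i < r + length (filter P [r..<r+z])"
  using assms
proof (induction z arbitrary: i)
  case 0
  from \<open>r \<le> i\<close> \<open>i < r + 0\<close> show ?case by simp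
next
  case (Suc z)
  note closed = Suc.prems(3)
  have IH: "P i \<longleftrightarrow> i < r + length (filter P [r..<r+z])" if "r \<le> i" "i < r + z" for i
  proof (rule Suc.IH[OF that])
    show "P i" if "r \<le> i" "i \<le> j" "j < r + z" "P j" for i j
      using closed[of i j] that by simp
  qed
  show ?case
  proof (cases "P (r + z)")
    case True
    have "P i" if "r \<le> i" "i < r + Suc z" for i
      using closed[of i "r + z"] that True by simp
    then have "\<forall>i\<in>set [r..<r + Suc z]. P i" by simp
    then show ?thesis using Suc.prems(1,2) by (simp del: upt_Suc)
  next
    case False
    then have "filter P [r..<r + Suc z] = filter P [r..<r+z]" by simp
    then show ?thesis
      using False IH[of i] Suc.prems(1,2) length_filter_le[of P "[r..<r+z]"]
      by (cases "i = r + z") auto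
  qed
qed

lemma pf_letter_zero [simp]: "pf_letter k D r 0 = 2 * D ! r"
  by (simp add: pf_letter_def)

lemma pf_letter_minus_k [simp]: "1 \<le> k \<Longrightarrow> pf_letter k D r (- int k) = 2 * int r + 1"
  by (simp add: pf_letter_def)

lemma fill_pf_letter_id:
  assumes "\<forall>x\<in>set ns. x \<noteq> 0 \<and> x \<noteq> - int k"
  shows "count_list ns 0 = 0" "fill (pf_letter k D) r ns = ns"
proof -
  have "0 \<notin> set ns" using assms by auto
  moreover have "map (pf_letter k D r) ns = ns"
    by (rule map_idI) (use assms in \<open>auto simp: pf_letter_def\<close>)
  ultimately show "count_list ns 0 = 0" "fill (pf_letter k D) r ns = ns"
    by (simp_all add: count_list_0_iff fill_no_zero)
qed

lemma fill_pf_letter_shape: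
  assumes "\<forall>x\<in>set ns. x \<noteq> 0 \<and> x \<noteq> - int k" "1 \<le> k"
  shows "fill (pf_letter k D) r (ns @ replicate a 0 @ replicate f (- int k) @ replicate b 0)
    = ns @ map (\<lambda>i. 2 * D ! i) [r..<r+a] @ replicate f (2 * int (r + a) + 1)
      @ map (\<lambda>i. 2 * D ! i) [r+a..<r+a+b]"
proof -
  note fill_pf_letter_id[OF assms(1)]
  moreover have "fill (pf_letter k D) r' (replicate f (- int k))
    = replicate f (2 * int r' + 1)" for r'
    using assms(2) by (induction f) (auto simp: pf_letter_def)
  ultimately show ?thesis
    using assms(2) by (simp add: fill_append fill_replicate_zero pf_letter_def)
qed

lemma fill_df_letter_shape:
  assumes "\<forall>x\<in>set ns. x < 0"
  shows "fill (df_letter D) r (ns @ replicate z 0) = ns @ map ((!) D) [r..<r+z]"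
proof -
  have "0 \<notin> set ns" using assms by auto
  then have "count_list ns 0 = 0" "fill (df_letter D) r ns = ns"
    by (auto simp: count_list_0_iff fill_no_zero df_letter_def intro!: map_idI)
  then show ?thesis by (simp add: fill_append fill_replicate_zero df_letter_def)
qed

lemma fill_df_letter_Pos:
  "0 \<notin> set v \<Longrightarrow> fill (df_letter (P @ Pos v)) (length P) (map (\<lambda>x. if 0 < x then 0 else x) v) = v"
proof (induction v arbitrary: P)
  case (Cons x v)
  show ?case
  proof (cases "0 < x")
    case True
    then show ?thesis using Cons.IH[of "P @ [x]"] Cons.prems
      by (simp add: Pos_def df_letter_def nth_append)
  next
    case False
    then show ?thesis using Cons by (simp add: Pos_def df_letter_def)
  qed
qed simp

lemma mset_df_block: "mset (df_block M) = M"
  unfolding df_block_def by (auto simp: multiset_eq_iff)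

lemma mset_pf_block:
  assumes "1 \<le> k"
  shows "mset (pf_block k D r M) = M"
  using assms slot_le[of D r "count M 0"] unfolding pf_block_def Let_def
  by (auto simp: multiset_eq_iff)

section \<open>Sorted blocks are determined by their letters\<close>

(* D plays the role of the reduced derangement word Der. *)
locale zero_filling =
  fixes k :: nat and D :: "int list"
  assumes k_pos: "1 \<le> k"
    and D_pos: "\<forall>x\<in>set D. 0 < x"
    and distinct_D: "distinct D"
    and D_no_fixed_point: "\<forall>j<length D. D ! j \<noteq> int (Suc j)"
begin

lemma nth_D_pos: "i < length D \<Longrightarrow> 0 < D ! i"
  using D_pos by simp

lemma fill_neg_iff:
  assumes "r + count_list p 0 \<le> length D" "(\<And>r x. x \<noteq> 0 \<Longrightarrow> f r x < 0 \<longleftrightarrow> P x)"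
    "\<And>i. i < length D \<Longrightarrow> \<not> f i 0 < 0" "\<not> P 0"
  shows "\<forall>j<length p. fill f r p ! j < 0 \<longleftrightarrow> P (p ! j)"
proof (intro allI impI)
  fix j assume j: "j < length p"
  show "fill f r p ! j < 0 \<longleftrightarrow> P (p ! j)"
  proof (cases "p ! j = 0")
    case True
    then have "r + count_list (take j p) 0 < length D"
      using count_list_take_less[OF j] assms(1) by simp
    then show ?thesis using True assms(3,4) nth_fill[OF j] by simp
  qed (use assms(2) nth_fill[OF j] in simp)
qed

lemma sorted_fill_df_iff:
  assumes "\<forall>x\<in>set p. x \<le> 0" "r + count_list p 0 \<le> length D"
  shows "sorted (fill (df_letter D) r p) \<longleftrightarrow>
    p = df_block (mset p) \<and> sorted (map ((!) D) [r..<r + count_list p 0])"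
proof -
  define z where "z = count_list p 0"
  define ns where "ns = filter (\<lambda>x. x < 0) p"
  have ns_neg: "\<forall>x\<in>set ns. x < 0" unfolding ns_def by simp
  have "filter (\<lambda>x. x \<noteq> 0) p = ns"
    unfolding ns_def using assms(1) by (intro filter_cong) auto
  then have block: "df_block (mset p) = sort ns @ replicate z 0"
    unfolding df_block_def z_def by (simp add: sorted_list_of_multiset_filter_mset count_mset)
  have D_block_pos: "\<forall>y\<in>set (map ((!) D) [r..<r+z]). 0 < y"
    using D_pos assms(2) unfolding z_def by auto
  show ?thesis
  proof
    assume sorted: "sorted (fill (df_letter D) r p)"
    have "\<forall>j<length p. fill (df_letter D) r p ! j < 0 \<longleftrightarrow> p ! j < 0"
      by (rule fill_neg_iff) (use assms(2) nth_D_pos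
        in \<open>auto simp: df_letter_def not_less less_imp_le\<close>)
    then have "p = ns @ filter (\<lambda>x. \<not> x < 0) p"
      unfolding ns_def using sorted by (intro sorted_sign_partition) auto
    also have "filter (\<lambda>x. \<not> x < 0) p = filter ((=) 0) p"
      using assms(1) by (intro filter_cong) auto
    also have "\<dots> = replicate z 0"
      unfolding z_def by (simp add: count_mset flip: replicate_count_mset_eq_filter_eq)
    finally have p: "p = ns @ replicate z 0" .
    with sorted have "sorted (ns @ map ((!) D) [r..<r+z])"
      using fill_df_letter_shape[OF ns_neg] by simp
    then show "p = df_block (mset p) \<and> sorted (map ((!) D) [r..<r + count_list p 0])"
      using p block unfolding z_def[symmetric] by (simp add: sorted_append sorted_sort_id)
  next
    assume "p = df_block (mset p) \<and> sorted (map ((!) D) [r..<r + count_list p 0])"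
    then have "p = sort ns @ replicate z 0" "sorted (map ((!) D) [r..<r+z])"
      using block z_def by auto
    moreover have "\<forall>x\<in>set (sort ns). x < 0" using ns_neg by simp
    ultimately show "sorted (fill (df_letter D) r p)"
      using fill_df_letter_shape[of "sort ns"] D_block_pos by (fastforce simp: sorted_append)
  qed
qed

lemma nth_less_on_sorted_block:
  assumes "sorted (map ((!) D) [r..<r+z])" "r + z \<le> length D" "r \<le> i" "i < j" "j < r + z"
  shows "D ! i < D ! j"
proof -
  have "D ! i \<le> D ! j"
    using sorted_nth_mono[OF assms(1), of "i - r" "j - r"] assms(3-5) by simp
  moreover have "D ! i \<noteq> D ! j"
    using distinct_D assms(2-5) by (simp add: nth_eq_iff_index_eq)
  ultimately show ?thesis by simp
qed

lemma slot_prefix: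
  assumes "sorted (map ((!) D) [r..<r+z])" "r + z \<le> length D" "r \<le> i" "i < r + z"
  shows "D ! i < int (Suc i) \<longleftrightarrow> i < r + slot D r z"
  unfolding slot_def
proof (rule filter_upt_downward_closed[OF _ assms(3,4)])
  fix i j assume ij: "r \<le> i" "i \<le> j" "j < r + z" "D ! j < int (Suc j)"
  from \<open>i \<le> j\<close> show "D ! i < int (Suc i)"
  proof (induction rule: inc_induct)
    case base
    show ?case by (fact ij(4))
  next
    case (step n)
    then show ?case using nth_less_on_sorted_block[OF assms(1,2), of n "Suc n"] ij by simp
  qed
qed

lemma sorted_fill_pf_Cons_zero:
  assumes block: "sorted (map ((!) D) [Suc r..<Suc r + z])"
    and q: "q = replicate (slot D (Suc r) z) 0 @ replicate f (- int k)
        @ replicate (z - slot D (Suc r) z) 0"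
    and len: "Suc r + z \<le> length D" and sorted: "sorted (fill (pf_letter k D) r (0 # q))"
  shows "sorted (map ((!) D) [r..<r + Suc z])"
    and "0 # q = replicate (slot D r (Suc z)) 0 @ replicate f (- int k)
      @ replicate (Suc z - slot D r (Suc z)) 0"
proof -
  define s where "s = slot D (Suc r) z"
  have s_le: "s \<le> z" unfolding s_def by (rule slot_le)
  have fill_q: "fill (pf_letter k D) (Suc r) q = map (\<lambda>i. 2 * D ! i) [Suc r..<Suc r + s]
      @ replicate f (2 * int (Suc r + s) + 1) @ map (\<lambda>i. 2 * D ! i) [Suc r + s..<Suc r + z]"
    using fill_pf_letter_shape[of "[]" k D "Suc r" s f "z - s"] k_pos s_le unfolding q s_def by simp
  have first: "2 * D ! r \<le> y" if "y \<in> set (fill (pf_letter k D) (Suc r) q)" for y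
    using sorted that by simp
  have "D ! r \<le> D ! i" if "Suc r \<le> i" "i < Suc r + z" for i
  proof -
    have "i \<in> set [Suc r..<Suc r + s] \<or> i \<in> set [Suc r + s..<Suc r + z]"
      using that by auto
    then have "2 * D ! i \<in> set (map (\<lambda>i. 2 * D ! i) [Suc r..<Suc r + s])
        \<or> 2 * D ! i \<in> set (map (\<lambda>i. 2 * D ! i) [Suc r + s..<Suc r + z])"
      by (metis imageI set_map)
    then have "2 * D ! i \<in> set (fill (pf_letter k D) (Suc r) q)"
      unfolding fill_q by (simp only: set_append Un_iff) blast
    then show ?thesis using first by fastforce
  qed
  then show block': "sorted (map ((!) D) [r..<r + Suc z])"
    using block by (simp add: upt_conv_Cons del: upt_Suc)
  show "0 # q = replicate (slot D r (Suc z)) 0 @ replicate f (- int k)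
      @ replicate (Suc z - slot D r (Suc z)) 0"
  proof (cases "f = 0")
    case True
    then show ?thesis using q s_le slot_le[of D r "Suc z"] unfolding s_def[symmetric]
      by (simp flip: replicate_add)
  next
    case False
    then have "2 * D ! r \<le> 2 * int (Suc r + s) + 1" using first unfolding fill_q by simp
    moreover have "D ! r \<noteq> int (Suc r)" using D_no_fixed_point len by simp
    moreover have "D ! Suc r < int (Suc (Suc r))" "D ! r < D ! Suc r" if "s \<noteq> 0"
      using slot_prefix[OF block len, of "Suc r"] nth_less_on_sorted_block[OF block', of r "Suc r"]
        len that s_le unfolding s_def by auto
    ultimately have "D ! r < int (Suc r)" by (cases "s = 0") auto
    then have "slot D r (Suc z) = Suc s" using slot_Suc_left unfolding s_def by simp
    then show ?thesis using q s_le unfolding s_def[symmetric] by simp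
  qed
qed

lemma sorted_fill_pf_Cons_k:
  assumes block: "sorted (map ((!) D) [r..<r + z])"
    and q: "q = replicate (slot D r z) 0 @ replicate f (- int k) @ replicate (z - slot D r z) 0"
    and len: "r + z \<le> length D" and sorted: "sorted (fill (pf_letter k D) r (- int k # q))"
  shows "slot D r z = 0"
proof (rule ccontr)
  assume s: "slot D r z \<noteq> 0"
  then have "D ! r < int (Suc r)"
    using slot_prefix[OF block len, of r] slot_le[of D r z] by simp
  moreover have "2 * D ! r \<in> set (fill (pf_letter k D) r q)"
    using s fill_pf_letter_shape[of "[]" k D r "slot D r z" f "z - slot D r z"] k_pos
      slot_le[of D r z]
    unfolding q by simp
  then have "2 * int r + 1 \<le> 2 * D ! r" using sorted k_pos by simp
  ultimately show False by simp
qed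

lemma sorted_fill_pf_zeros_and_k:
  assumes "set q \<subseteq> {0, - int k}" "r + count_list q 0 \<le> length D"
    "sorted (fill (pf_letter k D) r q)"
  shows "sorted (map ((!) D) [r..<r + count_list q 0]) \<and>
    q = replicate (slot D r (count_list q 0)) 0 @ replicate (count_list q (- int k)) (- int k)
      @ replicate (count_list q 0 - slot D r (count_list q 0)) 0"
  using assms
proof (induction q arbitrary: r)
  case (Cons x q)
  have k0: "- int k \<noteq> 0" using k_pos by simp
  have "x = 0 \<or> x = - int k" using Cons.prems(1) by auto
  then show ?case
  proof
    assume x: "x = 0"
    then have IH: "sorted (map ((!) D) [Suc r..<Suc r + count_list q 0])"
      "q = replicate (slot D (Suc r) (count_list q 0)) 0
          @ replicate (count_list q (- int k)) (- int k)
        @ replicate (count_list q 0 - slot D (Suc r) (count_list q 0)) 0"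
      using Cons.IH[of "Suc r"] Cons.prems by (auto simp: k_pos)
    have "Suc r + count_list q 0 \<le> length D" "sorted (fill (pf_letter k D) r (0 # q))"
      using Cons.prems x by simp_all
    note step = sorted_fill_pf_Cons_zero[OF IH this]
    have "count_list (0 # q) 0 = Suc (count_list q 0)"
      "count_list (0 # q) (- int k) = count_list q (- int k)"
      using k0 by simp_all
    with step show ?case unfolding x by (simp only:)
  next
    assume x: "x = - int k"
    then have IH: "sorted (map ((!) D) [r..<r + count_list q 0])
      \<and> q = replicate (slot D r (count_list q 0)) 0 @ replicate (count_list q (- int k)) (- int k)
        @ replicate (count_list q 0 - slot D r (count_list q 0)) 0"
      using Cons.IH[of r] Cons.prems k0 by (auto simp: k_pos)
    then have "slot D r (count_list q 0) = 0"
      using sorted_fill_pf_Cons_k[of r "count_list q 0" q "count_list q (- int k)"] Cons.prems k0 x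
      by simp
    then show ?case using IH k0 unfolding x by simp
  qed
qed (simp add: slot_def)

lemma sorted_fill_pf_canonical:
  assumes D_sorted: "sorted (map ((!) D) [r..<r + z])" and len: "r + z \<le> length D"
    and ns: "\<forall>x\<in>set ns. x < 0 \<and> x \<noteq> - int k" "sorted ns"
  shows "sorted (fill (pf_letter k D) r
    (ns @ replicate (slot D r z) 0 @ replicate f (- int k) @ replicate (z - slot D r z) 0))"
proof -
  define s where "s = slot D r z"
  have s_le: "s \<le> z" unfolding s_def by (rule slot_le)
  define A where "A = map (\<lambda>i. 2 * D ! i) [r..<r+s]"
  define X where "X = replicate f (2 * int (r + s) + 1)"
  define B where "B = map (\<lambda>i. 2 * D ! i) [r+s..<r+z]"
  have "[r..<r+z] = [r..<r+s] @ [r+s..<r+z]" using s_le upt_add_eq_append[of r "r+s" "z-s"] by simp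
  then have "A @ B = map (\<lambda>i. 2 * D ! i) [r..<r+z]" unfolding A_def B_def by simp
  then have AB: "sorted (A @ B)" using D_sorted by (simp add: sorted_map)
  have AX: "a < x" if "a \<in> set A" "x \<in> set X" for a x
  proof -
    obtain i where "r \<le> i" "i < r + s" "a = 2 * D ! i" using \<open>a \<in> set A\<close> unfolding A_def by auto
    moreover have "D ! i < int (Suc i)"
      using slot_prefix[OF D_sorted len, of i] s_le calculation(1,2) unfolding s_def by simp
    ultimately show ?thesis using \<open>x \<in> set X\<close> unfolding X_def by simp
  qed
  have XB: "x < b" if "x \<in> set X" "b \<in> set B" for x b
  proof -
    obtain i where i: "r + s \<le> i" "i < r + z" "b = 2 * D ! i"
      using \<open>b \<in> set B\<close> unfolding B_def by auto
    moreover have "\<not> D ! i < int (Suc i)"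
      using slot_prefix[OF D_sorted len, of i] i unfolding s_def by simp
    moreover have "D ! i \<noteq> int (Suc i)" using D_no_fixed_point len i by simp
    ultimately show ?thesis using \<open>x \<in> set X\<close> unfolding X_def by simp
  qed
  have pos: "0 < y" if "y \<in> set (A @ X @ B)" for y
    using that len s_le nth_D_pos unfolding A_def X_def B_def by auto
  have "sorted (A @ X @ B)" using AB AX XB by (fastforce simp: sorted_append X_def)
  moreover have "\<forall>x\<in>set ns. x \<noteq> 0 \<and> x \<noteq> - int k" using ns(1) by auto
  then have "fill (pf_letter k D) r (ns @ replicate s 0 @ replicate f (- int k)
    @ replicate (z - s) 0)
      = ns @ A @ X @ B"
    using fill_pf_letter_shape[OF _ k_pos, of ns D r s f "z - s"] s_le
      unfolding A_def X_def B_def by simp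
  ultimately show ?thesis using pos ns unfolding s_def[symmetric] by (fastforce simp: sorted_append)
qed

lemma sorted_fill_pf_decompose:
  assumes range: "set p \<subseteq> {- int k..0}" and len: "r + count_list p 0 \<le> length D"
    and sorted: "sorted (fill (pf_letter k D) r p)"
  defines "ns \<equiv> filter (\<lambda>x. x < 0 \<and> x \<noteq> - int k) p"
    and "z \<equiv> count_list p 0" and "f \<equiv> count_list p (- int k)"
  shows "p = ns @ replicate (slot D r z) 0 @ replicate f (- int k) @ replicate (z - slot D r z) 0"
    and "sorted ns" and "sorted (map ((!) D) [r..<r + z])"
proof -
  define q where "q = filter (\<lambda>x. \<not> (x < 0 \<and> x \<noteq> - int k)) p"
  have "\<forall>j<length p. fill (pf_letter k D) r p ! j < 0 \<longleftrightarrow> p ! j < 0 \<and> p ! j \<noteq> - int k"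
    by (rule fill_neg_iff) (use len nth_D_pos in \<open>auto simp: pf_letter_def not_less less_imp_le\<close>)
  then have p: "p = ns @ q"
    unfolding ns_def q_def using sorted by (intro sorted_sign_partition) auto
  have q: "set q \<subseteq> {0, - int k}" "count_list q 0 = z" "count_list q (- int k) = f"
    using range k_pos unfolding q_def z_def f_def by (auto simp: count_list_filter)
  have "\<forall>x\<in>set ns. x \<noteq> 0 \<and> x \<noteq> - int k" unfolding ns_def by auto
  note fill_pf_letter_id[OF this]
  then have "fill (pf_letter k D) r p = ns @ fill (pf_letter k D) r q"
    by (subst p) (simp add: fill_append)
  then have "sorted ns" "sorted (fill (pf_letter k D) r q)"
    using sorted by (simp_all add: sorted_append)
  moreover have "sorted (map ((!) D) [r..<r + z])
      \<and> q = replicate (slot D r z) 0 @ replicate f (- int k) @ replicate (z - slot D r z) 0"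
    using sorted_fill_pf_zeros_and_k[of q r] q len calculation(2) unfolding z_def by simp
  ultimately show "p = ns @ replicate (slot D r z) 0 @ replicate f (- int k)
    @ replicate (z - slot D r z) 0"
    "sorted ns" "sorted (map ((!) D) [r..<r + z])"
    using p by simp_all
qed

lemma sorted_fill_pf_iff:
  assumes "set p \<subseteq> {- int k..0}" "r + count_list p 0 \<le> length D"
  shows "sorted (fill (pf_letter k D) r p) \<longleftrightarrow>
    p = pf_block k D r (mset p) \<and> sorted (map ((!) D) [r..<r + count_list p 0])"
proof -
  define ns where "ns = filter (\<lambda>x. x < 0 \<and> x \<noteq> - int k) p"
  have "filter (\<lambda>x. x \<noteq> 0 \<and> x \<noteq> - int k) p = ns"
    unfolding ns_def using assms(1) by (intro filter_cong) auto
  then have block: "pf_block k D r (mset p) = sort ns @ replicate (slot D r (count_list p 0)) 0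
      @ replicate (count_list p (- int k)) (- int k)
      @ replicate (count_list p 0 - slot D r (count_list p 0)) 0"
    unfolding pf_block_def Let_def by (simp add: sorted_list_of_multiset_filter_mset count_mset)
  show ?thesis
  proof
    assume "sorted (fill (pf_letter k D) r p)"
    from sorted_fill_pf_decompose[OF assms this] show "p = pf_block k D r (mset p)
        \<and> sorted (map ((!) D) [r..<r + count_list p 0])"
      unfolding block ns_def[symmetric] by (simp add: sorted_sort_id)
  next
    assume "p = pf_block k D r (mset p) \<and> sorted (map ((!) D) [r..<r + count_list p 0])"
    then have p: "p = pf_block k D r (mset p)"
      and D_sorted: "sorted (map ((!) D) [r..<r + count_list p 0])"
      by simp_all
    have "\<forall>x\<in>set (sort ns). x < 0 \<and> x \<noteq> - int k" unfolding ns_def by simp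
    with D_sorted have "sorted (fill (pf_letter k D) r (pf_block k D r (mset p)))"
      using sorted_fill_pf_canonical[of r "count_list p 0" "sort ns"] assms(2)
        unfolding block by simp
    then show "sorted (fill (pf_letter k D) r p)" using p by simp
  qed
qed

end

section \<open>Relabelling the fixed points\<close>

(* The identity on nonnegative integers, so that relabel \<sigma> is a bijection of int with
   inverse relabel (inv \<sigma>). *)
definition relabel :: "(nat \<Rightarrow> nat) \<Rightarrow> int \<Rightarrow> int" where
  "relabel \<sigma> x = (if x < 0 then - int (\<sigma> (nat (- x))) else x)"

lemma permutes_pos:
  fixes \<sigma> :: "nat \<Rightarrow> nat"
  assumes "\<sigma> permutes {1..k}" "0 < i"
  shows "0 < \<sigma> i"
proof (cases "i \<in> {1..k}")
  case True
  then show ?thesis using permutes_in_image[OF assms(1), of i] by simp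
qed (use assms in \<open>simp add: permutes_not_in\<close>)

lemma relabel_neg_iff:
  assumes "\<sigma> permutes {1..k}"
  shows "relabel \<sigma> x < 0 \<longleftrightarrow> x < 0"
proof (cases "x < 0")
  case True
  then show ?thesis using permutes_pos[OF assms, of "nat (- x)"] unfolding relabel_def by simp
qed (simp add: relabel_def)

lemma relabel_eq_zero_iff:
  assumes "\<sigma> permutes {1..k}"
  shows "relabel \<sigma> x = 0 \<longleftrightarrow> x = 0"
  using relabel_neg_iff[OF assms, of x] unfolding relabel_def by (auto split: if_splits)

lemma relabel_inv [simp]:
  assumes "\<sigma> permutes {1..k}"
  shows "relabel (inv \<sigma>) (relabel \<sigma> x) = x"
proof (cases "x < 0")
  case True
  then have "relabel \<sigma> x < 0" using relabel_neg_iff[OF assms] by simp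
  then show ?thesis using True permutes_inverses(2)[OF assms] unfolding relabel_def by simp
qed (simp add: relabel_def)

lemma relabel_zero [simp]: "relabel \<sigma> 0 = 0"
  by (simp add: relabel_def)

lemma relabel_minus:
  "relabel \<sigma> (- int i) = (if i = 0 then 0 else - int (\<sigma> i))"
  unfolding relabel_def by simp

lemma relabel_range:
  assumes "\<sigma> permutes {1..k}" "x \<in> {- int k..0}"
  shows "relabel \<sigma> x \<in> {- int k..0}"
proof (cases "x < 0")
  case True
  then have "nat (- x) \<in> {1..k}" using assms(2) by auto
  then show ?thesis using permutes_in_image[OF assms(1)] True unfolding relabel_def by auto
qed (use assms(2) in \<open>simp add: relabel_def\<close>)

lemma count_image_mset_inverse:
  assumes "\<And>x. g (f x) = x" "\<And>y. f (g y) = y"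
  shows "count (image_mset f M) y = count M (g y)"
proof (induction M)
  case (add x M)
  have "f x = y \<longleftrightarrow> x = g y" using assms(1)[of x] assms(2)[of y] by auto
  then show ?case using add by simp
qed simp

lemma count_image_mset_relabel:
  assumes "\<sigma> permutes {1..k}"
  shows "count (image_mset (relabel \<sigma>) M) y = count M (relabel (inv \<sigma>) y)"
proof (rule count_image_mset_inverse)
  show "relabel (inv \<sigma>) (relabel \<sigma> x) = x" for x using assms by simp
  show "relabel \<sigma> (relabel (inv \<sigma>) y) = y" for y
    using relabel_inv[OF permutes_inv[OF assms]] assms by (simp add: inv_inv_eq permutes_bij)
qed

lemma image_mset_relabel:
  assumes "\<sigma> permutes {1..k}" "set_mset M \<subseteq> {- int k..0}"
  shows "set_mset (image_mset (relabel \<sigma>) M) \<subseteq> {- int k..0}"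
    and "count (image_mset (relabel \<sigma>) M) 0 = count M 0"
    and "image_mset (relabel (inv \<sigma>)) (image_mset (relabel \<sigma>) M) = M"
proof -
  show "set_mset (image_mset (relabel \<sigma>) M) \<subseteq> {- int k..0}"
    using assms relabel_range[OF assms(1)] by auto
  show "count (image_mset (relabel \<sigma>) M) 0 = count M 0"
    using count_image_mset_relabel[OF assms(1), of M 0] by simp
  show "image_mset (relabel (inv \<sigma>)) (image_mset (relabel \<sigma>) M) = M"
    using relabel_inv[OF assms(1)] by (simp add: image_mset.compositionality comp_def)
qed

definition words :: "nat \<Rightarrow> nat \<Rightarrow> nat \<Rightarrow> (nat \<Rightarrow> nat) \<Rightarrow> int list set" where
  "words n k z m = {w. length w = n \<and> set w \<subseteq> {- int k..0} \<and> count_list w 0 = z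
     \<and> (\<forall>i\<in>{1..k}. count_list w (- int i) = m i)}"

lemma finite_words: "finite (words n k z m)"
proof (rule finite_subset)
  show "words n k z m \<subseteq> {xs. set xs \<subseteq> {- int k..0} \<and> length xs = n}"
    unfolding words_def by blast
qed (simp add: finite_lists_length_eq)

lemma words_relabel:
  assumes "\<sigma> permutes {1..k}" "w \<in> words n k z m" "mset v = image_mset (relabel \<sigma>) (mset w)"
  shows "v \<in> words n k z (\<lambda>i. m (inv \<sigma> i))"
proof -
  have count: "count_list v y = count_list w (relabel (inv \<sigma>) y)" for y
  proof -
    have "count_list v y = count (mset v) y" by (rule count_mset[symmetric])
    also have "\<dots> = count (mset w) (relabel (inv \<sigma>) y)"
      unfolding assms(3) by (rule count_image_mset_relabel[OF assms(1)])
    finally show ?thesis by (simp only: count_mset)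
  qed
  from assms(2) have w: "length w = n" "set w \<subseteq> {- int k..0}" "count_list w 0 = z"
    "\<And>i. i \<in> {1..k} \<Longrightarrow> count_list w (- int i) = m i"
    unfolding words_def by auto
  have "length v = length w" by (metis assms(3) size_image_mset size_mset)
  moreover have "set v = relabel \<sigma> ` set w" by (metis assms(3) set_image_mset set_mset_mset)
  then have "set v \<subseteq> {- int k..0}" using w(2) relabel_range[OF assms(1)] by auto
  moreover have "count_list v 0 = z" using count[of 0] w(3) by simp
  moreover have "count_list v (- int i) = m (inv \<sigma> i)" if i: "i \<in> {1..k}" for i
  proof -
    have "inv \<sigma> i \<in> {1..k}"
      using i permutes_in_image[OF permutes_inv[OF assms(1)], of i] by simp
    then show ?thesis using count[of "- int i"] w(4) i by (simp add: relabel_minus)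
  qed
  ultimately show ?thesis using w(1) unfolding words_def by blast
qed

context zero_filling
begin

lemma pf_block_relabel_sorted:
  assumes "\<tau> permutes {1..k}" "set p \<subseteq> {- int k..0}" "r + count_list p 0 \<le> length D"
    "sorted (fill (df_letter D) r p)"
  defines "q \<equiv> pf_block k D r (image_mset (relabel (inv \<tau>)) (mset p))"
  shows "mset q = image_mset (relabel (inv \<tau>)) (mset p) \<and> sorted (fill (pf_letter k D) r q)
    \<and> df_block (image_mset (relabel \<tau>) (mset q)) = p"
proof -
  have "inv (inv \<tau>) = \<tau>" using inv_inv_eq[OF permutes_bij[OF assms(1)]] .
  then have M: "set_mset (image_mset (relabel (inv \<tau>)) (mset p)) \<subseteq> {- int k..0}"
    "count (image_mset (relabel (inv \<tau>)) (mset p)) 0 = count_list p 0"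
    "image_mset (relabel \<tau>) (image_mset (relabel (inv \<tau>)) (mset p)) = mset p"
    using image_mset_relabel[OF permutes_inv[OF assms(1)], of "mset p"] assms(2)
    by (simp_all add: count_mset)
  have q: "mset q = image_mset (relabel (inv \<tau>)) (mset p)"
    unfolding q_def by (rule mset_pf_block[OF k_pos])
  have "\<forall>x\<in>set p. x \<le> 0" using assms(2) by auto
  then have df: "p = df_block (mset p)" "sorted (map ((!) D) [r..<r + count_list p 0])"
    using sorted_fill_df_iff[of p r] assms(3,4) by auto
  have "set q \<subseteq> {- int k..0}" using q M(1) by (metis set_mset_mset)
  moreover have "count_list q 0 = count_list p 0" using q M(2) by (simp flip: count_mset)
  moreover have "q = pf_block k D r (mset q)" using q unfolding q_def by simp
  ultimately have "sorted (fill (pf_letter k D) r q)"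
    using sorted_fill_pf_iff[of q r] df(2) assms(3) by simp
  with q M(3) df(1) show ?thesis by simp
qed

lemma df_block_relabel_sorted:
  assumes "\<sigma> permutes {1..k}" "set p \<subseteq> {- int k..0}" "r + count_list p 0 \<le> length D"
    "sorted (fill (pf_letter k D) r p)"
  defines "q \<equiv> df_block (image_mset (relabel \<sigma>) (mset p))"
  shows "mset q = image_mset (relabel \<sigma>) (mset p) \<and> sorted (fill (df_letter D) r q)
    \<and> pf_block k D r (image_mset (relabel (inv \<sigma>)) (mset q)) = p"
proof -
  have M: "set_mset (image_mset (relabel \<sigma>) (mset p)) \<subseteq> {- int k..0}"
    "count (image_mset (relabel \<sigma>) (mset p)) 0 = count_list p 0"
    "image_mset (relabel (inv \<sigma>)) (image_mset (relabel \<sigma>) (mset p)) = mset p"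
    using image_mset_relabel[OF assms(1), of "mset p"] assms(2) by (simp_all add: count_mset)
  have q: "mset q = image_mset (relabel \<sigma>) (mset p)"
    unfolding q_def by (rule mset_df_block)
  have pf: "p = pf_block k D r (mset p)" "sorted (map ((!) D) [r..<r + count_list p 0])"
    using sorted_fill_pf_iff[of p r] assms(2-4) by auto
  have "set q \<subseteq> {- int k..0}" using q M(1) by (metis set_mset_mset)
  moreover have "count_list q 0 = count_list p 0" using q M(2) by (simp flip: count_mset)
  moreover have "q = df_block (mset q)" using q unfolding q_def by simp
  moreover have "\<forall>x\<in>set q. x \<le> 0" using calculation(1) by auto
  ultimately have "sorted (fill (df_letter D) r q)"
    using sorted_fill_df_iff[of q r] pf(2) assms(3) by simp
  with q M(3) pf(1) show ?thesis by simp
qed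

lemma bij_betw_map_blocks_relabel:
  assumes \<tau>: "\<tau> permutes {1..k}" and n: "sum_list ls = n"
  shows "bij_betw (map_blocks (\<lambda>r p. pf_block k D r (image_mset (relabel (inv \<tau>)) (mset p))) 0 ls)
    {w \<in> words n k (length D) m. blocks_sorted (df_letter D) 0 ls w}
    {w \<in> words n k (length D) (\<lambda>i. m (\<tau> i)). blocks_sorted (pf_letter k D) 0 ls w}"
    (is "bij_betw ?\<Phi> ?A ?B")
proof -
  let ?\<Psi> = "map_blocks (\<lambda>r p. df_block (image_mset (relabel \<tau>) (mset p))) 0 ls"
  have inv_\<tau>: "inv \<tau> permutes {1..k}" using permutes_inv[OF \<tau>] .
  have \<Phi>: "mset (?\<Phi> w) = image_mset (relabel (inv \<tau>)) (mset w)
      \<and> blocks_sorted (pf_letter k D) 0 ls (?\<Phi> w) \<and> ?\<Psi> (?\<Phi> w) = w" if "w \<in> ?A" for w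
    by (rule map_blocks_transfer[where A = "{- int k..0}"
      and N = "length D", OF pf_block_relabel_sorted[OF \<tau>]])
      (use that n in \<open>auto simp: words_def relabel_eq_zero_iff[OF inv_\<tau>]\<close>)
  have \<Psi>: "mset (?\<Psi> w) = image_mset (relabel \<tau>) (mset w)
      \<and> blocks_sorted (df_letter D) 0 ls (?\<Psi> w) \<and> ?\<Phi> (?\<Psi> w) = w" if "w \<in> ?B" for w
    by (rule map_blocks_transfer[where A = "{- int k..0}"
      and N = "length D", OF df_block_relabel_sorted[OF \<tau>]])
      (use that n in \<open>auto simp: words_def relabel_eq_zero_iff[OF \<tau>]\<close>)
  show ?thesis
  proof (rule bij_betw_byWitness[where f' = ?\<Psi>])
    show "\<forall>a\<in>?A. ?\<Psi> (?\<Phi> a) = a" "\<forall>b\<in>?B. ?\<Phi> (?\<Psi> b) = b" using \<Phi> \<Psi> by blast+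
    show "?\<Phi> ` ?A \<subseteq> ?B"
      using \<Phi> words_relabel[OF inv_\<tau>] unfolding inv_inv_eq[OF permutes_bij[OF \<tau>]] by blast
    have "(\<lambda>i. m (\<tau> (inv \<tau> i))) = m" using permutes_inverses(1)[OF \<tau>] by simp
    then show "?\<Psi> ` ?B \<subseteq> ?A"
      using \<Psi> words_relabel[OF \<tau>, of _ n "length D" "\<lambda>i. m (\<tau> i)"] by auto
  qed
qed

lemma card_words_DES_fill_subset_eq:
  assumes "\<tau> permutes {1..k}" "1 \<le> n"
  shows "card {w \<in> words n k (length D) m. DES_word (fill (df_letter D) 0 w) \<subseteq> S}
       = card {w \<in> words n k (length D) (\<lambda>i. m (\<tau> i)). DES_word (fill (pf_letter k D) 0 w) \<subseteq> S}"
proof -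
  obtain ls where ls: "sum_list ls = n"
    and iff: "\<And>f w. length w = n \<Longrightarrow> DES_word (fill f 0 w) \<subseteq> S \<longleftrightarrow> blocks_sorted f 0 ls w"
    using blocks_sorted_iff_DES_word_subset[OF assms(2)] by blast
  have "{w \<in> words n k (length D) m'. DES_word (fill f 0 w) \<subseteq> S}
      = {w \<in> words n k (length D) m'. blocks_sorted f 0 ls w}" for f m'
    using iff unfolding words_def by auto
  then show ?thesis using bij_betw_same_card[OF bij_betw_map_blocks_relabel[OF assms(1) ls]] by simp
qed

lemma card_words_DES_fill_eq:
  assumes "\<tau> permutes {1..k}" "1 \<le> n"
  shows "card {w \<in> words n k (length D) m. DES_word (fill (df_letter D) 0 w) = S}
       = card {w \<in> words n k (length D) (\<lambda>i. m (\<tau> i)). DES_word (fill (pf_letter k D) 0 w) = S}"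
  by (rule card_fibres_eq_if_card_lower_fibres_eq)
    (use finite_words finite_DES_word card_words_DES_fill_subset_eq[OF assms] in auto)

end

section \<open>Arrangements as labelled words\<close>

lemma count_list_map_upt: "count_list (map f [a..<b]) x = card {i\<in>{a..<b}. f i = x}"
proof -
  have "count_list (map f [a..<b]) x = length (filter (\<lambda>i. f i = x) [a..<b])"
    by (simp add: count_list_eq_length_filter filter_map comp_def eq_commute)
  also have "\<dots> = card {i\<in>{a..<b}. f i = x}"
    by (simp add: distinct_length_filter Int_def conj_commute)
  finally show ?thesis .
qed

lemma length_Pos_eq_count_zeroed:
  "0 \<notin> set v \<Longrightarrow> length (Pos v) = count_list (map (\<lambda>x. if 0 < x then 0 else x) v) 0"
  by (induction v) (auto simp: Pos_def)

definition rank_in :: "nat set \<Rightarrow> nat \<Rightarrow> nat" where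
  "rank_in C x = card {y\<in>C. y < x}"

lemma rank_in_mono: "finite C \<Longrightarrow> x \<le> y \<Longrightarrow> rank_in C x \<le> rank_in C y"
  unfolding rank_in_def by (intro card_mono) auto

lemma rank_in_strict_mono: "finite C \<Longrightarrow> x \<in> C \<Longrightarrow> x < y \<Longrightarrow> rank_in C x < rank_in C y"
  unfolding rank_in_def by (rule psubset_card_mono) auto

lemma rank_in_less_iff:
  "finite C \<Longrightarrow> x \<in> C \<Longrightarrow> y \<in> C \<Longrightarrow> rank_in C x < rank_in C y \<longleftrightarrow> x < y"
  by (metis rank_in_strict_mono linorder_neqE_nat less_asym)

lemma inj_on_rank_in: "finite C \<Longrightarrow> inj_on (rank_in C) C"
  by (rule inj_onI) (metis rank_in_less_iff linorder_neqE_nat less_irrefl)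

lemma rank_in_less_card: "finite C \<Longrightarrow> x \<in> C \<Longrightarrow> rank_in C x < card C"
  unfolding rank_in_def by (rule psubset_card_mono) auto

lemma rank_in_image: "finite C \<Longrightarrow> rank_in C ` C = {0..<card C}"
proof (rule card_subset_eq)
  assume "finite C"
  then show "rank_in C ` C \<subseteq> {0..<card C}" by (auto simp: rank_in_less_card)
  show "card (rank_in C ` C) = card {0..<card C}"
    using card_image[OF inj_on_rank_in[OF \<open>finite C\<close>]] by simp
qed simp

(* The positive letters of the permutation form are \<pi> t for non-fixed t and t for the fixed
   points labelled -k; rank_code maps them monotonically onto the letters of pf_letter. *)
definition rank_code :: "nat set \<Rightarrow> int \<Rightarrow> int" where
  "rank_code C v = (if v < 0 then v else if nat v \<in> C then 2 * int (rank_in C (nat v)) + 2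
     else 2 * int (rank_in C (nat v)) + 1)"

lemma rank_code_strict_mono:
  assumes "finite C" "v < w" "v < 0 \<or> nat v \<in> C \<or> nat w \<in> C"
  shows "rank_code C v < rank_code C w"
proof (cases "v < 0")
  case False
  then have "nat v < nat w" using assms(2) by simp
  then have "rank_in C (nat v) \<le> rank_in C (nat w)"
    and "nat v \<in> C \<Longrightarrow> rank_in C (nat v) < rank_in C (nat w)"
    using rank_in_mono[OF assms(1)] rank_in_strict_mono[OF assms(1)] by auto
  then show ?thesis using False assms(2,3) unfolding rank_code_def by auto
qed (use assms(2) in \<open>auto simp: rank_code_def\<close>)

lemma rank_code_mono:
  assumes "finite C" "v \<le> w"
  shows "rank_code C v \<le> rank_code C w"
proof (cases "v < 0 \<or> nat v \<in> C \<or> nat w \<in> C")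
  case True
  then show ?thesis using rank_code_strict_mono[OF assms(1) _ True] assms(2) by (cases "v = w") auto
next
  case False
  then show ?thesis
    using rank_in_mono[OF assms(1), of "nat v" "nat w"] assms(2) unfolding rank_code_def by auto
qed

definition derangement_word :: "int list \<Rightarrow> bool" where
  "derangement_word D \<longleftrightarrow> distinct D \<and> set D = {1..int (length D)}
     \<and> (\<forall>j<length D. D ! j \<noteq> int (Suc j))"

lemma zero_filling_if_derangement_word: "1 \<le> k \<Longrightarrow> derangement_word D \<Longrightarrow> zero_filling k D"
  unfolding derangement_word_def by unfold_locales auto

definition label_word :: "nat \<Rightarrow> arrangement \<Rightarrow> int list" where
  "label_word n a = map (snd a) [1..<n+1]"

definition nonfixed :: "nat \<Rightarrow> arrangement \<Rightarrow> nat set" where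
  "nonfixed n a = {i \<in> {1..n}. snd a i = 0}"

lemma length_label_word [simp]: "length (label_word n a) = n"
  unfolding label_word_def by simp

lemma nth_label_word: "j < n \<Longrightarrow> label_word n a ! j = snd a (Suc j)"
  unfolding label_word_def by (simp add: nth_map_upt del: upt_Suc)

lemma count_take_label_word:
  "j \<le> n \<Longrightarrow> count_list (take j (label_word n a)) 0 = rank_in (nonfixed n a) (Suc j)"
proof -
  assume j: "j \<le> n"
  have "take j (label_word n a) = map (snd a) [1..<j+1]"
    unfolding label_word_def using j by (simp add: take_map del: upt_Suc)
  moreover have "{i\<in>{1..<j+1}. snd a i = 0} = {y\<in>nonfixed n a. y < Suc j}"
    unfolding nonfixed_def using j by auto
  ultimately show ?thesis unfolding rank_in_def by (simp add: count_list_map_upt del: upt_Suc)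
qed

lemma count_label_word_zero: "count_list (label_word n a) 0 = card (nonfixed n a)"
proof -
  have "{i\<in>{1..<n+1}. snd a i = 0} = nonfixed n a" unfolding nonfixed_def by auto
  then show ?thesis unfolding label_word_def by (simp add: count_list_map_upt del: upt_Suc)
qed

context
  fixes n k :: nat and \<pi> :: "nat \<Rightarrow> nat" and \<phi> :: "nat \<Rightarrow> int"
  assumes arr: "(\<pi>, \<phi>) \<in> arrangements n k"
begin

lemma arrangement_permutes: "\<pi> permutes {1..n}"
  using arr unfolding arrangements_def by simp

lemma label_cases: "if i \<in> FIX n \<pi> then \<phi> i \<in> {- int k..-1} else \<phi> i = 0"
  using arr unfolding arrangements_def mem_Collect_eq case_prod_conv by blast

lemma label_eq_0_iff: "\<phi> i = 0 \<longleftrightarrow> i \<notin> FIX n \<pi>"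
  using label_cases[of i] by (auto split: if_splits)

lemma label_range: "\<phi> i \<in> {- int k..0}"
  using label_cases[of i] by (auto split: if_splits)

lemma label_nonzero: "\<phi> i \<noteq> 0 \<Longrightarrow> i \<in> {1..n} \<and> \<pi> i = i"
  using label_eq_0_iff[of i] unfolding FIX_def by auto

lemma label_outside: "i \<notin> {1..n} \<Longrightarrow> \<phi> i = 0"
  using label_nonzero[of i] by auto

lemma finite_nonfixed: "finite (nonfixed n (\<pi>, \<phi>))"
  unfolding nonfixed_def by simp

lemma nonfixed_moved: "t \<in> nonfixed n (\<pi>, \<phi>) \<Longrightarrow> \<pi> t \<noteq> t"
  using label_eq_0_iff[of t] unfolding nonfixed_def FIX_def by auto

lemma permutation_nonfixed: "t \<in> nonfixed n (\<pi>, \<phi>) \<Longrightarrow> \<pi> t \<in> nonfixed n (\<pi>, \<phi>)"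
proof -
  assume t: "t \<in> nonfixed n (\<pi>, \<phi>)"
  then have "\<pi> t \<in> {1..n}"
    using permutes_in_image[OF arrangement_permutes] unfolding nonfixed_def by simp
  moreover have "\<phi> (\<pi> t) = 0"
  proof (rule ccontr)
    assume "\<phi> (\<pi> t) \<noteq> 0"
    then have "\<pi> (\<pi> t) = \<pi> t" using label_nonzero by blast
    then show False
      using nonfixed_moved[OF t] permutes_inj[OF arrangement_permutes] by (simp add: inj_eq)
  qed
  ultimately show "\<pi> t \<in> nonfixed n (\<pi>, \<phi>)" unfolding nonfixed_def by simp
qed

lemma fixi_eq_count_label_word:
  "1 \<le> i \<Longrightarrow> fixi n i (\<pi>, \<phi>) = count_list (label_word n (\<pi>, \<phi>)) (- int i)"
proof -
  assume "1 \<le> i"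
  then have "{j\<in>{1..<n+1}. \<phi> j = - int i} = {j \<in> FIX n \<pi>. \<phi> j = - int i}"
    using label_eq_0_iff unfolding FIX_def by fastforce
  then show ?thesis unfolding label_word_def fixi_def by (simp add: count_list_map_upt del: upt_Suc)
qed

lemma df_eq_red_pos:
  "df n k (\<pi>, \<phi>) = red_pos (map (\<lambda>i. if \<phi> i = 0 then int (\<pi> i) else \<phi> i) [1..<n+1])"
  unfolding df_def fst_conv snd_conv
  by (rule arg_cong[where f = red_pos], rule map_cong) (use label_eq_0_iff in auto)

lemma positive_letters_df:
  "{y \<in> set (map (\<lambda>i. if \<phi> i = 0 then int (\<pi> i) else \<phi> i) [1..<n+1]). 0 < y}
     = int ` nonfixed n (\<pi>, \<phi>)"
proof -
  have "\<pi> ` nonfixed n (\<pi>, \<phi>) = nonfixed n (\<pi>, \<phi>)"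
    using permutation_nonfixed permutes_inj[OF arrangement_permutes]
    by (intro endo_inj_surj[OF finite_nonfixed]) (auto intro: inj_on_subset)
  moreover have "{y \<in> set (map (\<lambda>i. if \<phi> i = 0 then int (\<pi> i) else \<phi> i) [1..<n+1]). 0 < y}
      = int ` \<pi> ` nonfixed n (\<pi>, \<phi>)" (is "?P = _")
  proof (intro equalityI subsetI)
    fix y assume "y \<in> ?P"
    then have "y \<in> (\<lambda>i. if \<phi> i = 0 then int (\<pi> i) else \<phi> i) ` set [1..<n+1]" "0 < y"
      unfolding set_map by blast+
    then obtain i where "i \<in> set [1..<n+1]" "y = (if \<phi> i = 0 then int (\<pi> i) else \<phi> i)" "0 < y"
      by blast
    then have i: "i \<in> {1..n}" "y = (if \<phi> i = 0 then int (\<pi> i) else \<phi> i)" "0 < y"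
      by (auto simp del: upt_Suc)
    then have "\<phi> i = 0" using label_range[of i] by (auto split: if_splits)
    then show "y \<in> int ` \<pi> ` nonfixed n (\<pi>, \<phi>)" using i unfolding nonfixed_def by auto
  next
    fix y assume "y \<in> int ` \<pi> ` nonfixed n (\<pi>, \<phi>)"
    then obtain i where i: "i \<in> {1..n}" "\<phi> i = 0" "y = int (\<pi> i)" unfolding nonfixed_def by auto
    then have "0 < y" using permutes_in_image[OF arrangement_permutes, of i] by auto
    then show "y \<in> ?P" using i by (auto simp del: upt_Suc)
  qed
  ultimately show ?thesis by simp
qed

lemma nth_df:
  assumes "j < n"
  shows "df n k (\<pi>, \<phi>) ! j =
    (if \<phi> (Suc j) = 0 then int (rank_in (nonfixed n (\<pi>, \<phi>)) (\<pi> (Suc j))) + 1 else \<phi> (Suc j))"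
proof -
  define raw where "raw = map (\<lambda>i. if \<phi> i = 0 then int (\<pi> i) else \<phi> i) [1..<n+1]"
  have raw_j: "raw ! j = (if \<phi> (Suc j) = 0 then int (\<pi> (Suc j)) else \<phi> (Suc j))"
    unfolding raw_def using assms by (simp add: nth_map_upt del: upt_Suc)
  have "\<phi> (Suc j) \<le> 0" using label_range by simp
  moreover have "0 < \<pi> (Suc j)"
    using permutes_in_image[OF arrangement_permutes, of "Suc j"] assms by simp
  moreover have "{y \<in> set raw. 0 < y \<and> y < int (\<pi> (Suc j))}
      = {y \<in> {y \<in> set raw. 0 < y}. y < int (\<pi> (Suc j))}" by auto
  then have "{y \<in> set raw. 0 < y \<and> y < int (\<pi> (Suc j))}
      = int ` {c \<in> nonfixed n (\<pi>, \<phi>). c < \<pi> (Suc j)}"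
    unfolding raw_def positive_letters_df by auto
  moreover have "card (int ` {c \<in> nonfixed n (\<pi>, \<phi>). c < \<pi> (Suc j)})
    = rank_in (nonfixed n (\<pi>, \<phi>)) (\<pi> (Suc j))"
    unfolding rank_in_def by (rule card_image) simp
  moreover have "j < length raw" using assms unfolding raw_def by simp
  ultimately show ?thesis
    using raw_j unfolding df_eq_red_pos raw_def[symmetric] red_pos_def by simp
qed

lemma length_df [simp]: "length (df n k (\<pi>, \<phi>)) = n"
  unfolding df_def red_pos_def by simp

lemma df_positive_iff: "j < n \<Longrightarrow> 0 < df n k (\<pi>, \<phi>) ! j \<longleftrightarrow> \<phi> (Suc j) = 0"
  using nth_df[of j] label_range[of "Suc j"] by auto

lemma zero_not_in_df: "0 \<notin> set (df n k (\<pi>, \<phi>))"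
proof
  assume "0 \<in> set (df n k (\<pi>, \<phi>))"
  then obtain j where "j < n" "df n k (\<pi>, \<phi>) ! j = 0" by (auto simp: in_set_conv_nth)
  then show False using nth_df[of j] by (auto split: if_splits)
qed

lemma zeroed_df: "map (\<lambda>x. if 0 < x then 0 else x) (df n k (\<pi>, \<phi>)) = label_word n (\<pi>, \<phi>)"
  using label_range
  by (intro nth_equalityI) (auto simp: df_positive_iff nth_label_word nth_df not_less)

lemma df_eq_fill: "df n k (\<pi>, \<phi>) = fill (df_letter (Der n k (\<pi>, \<phi>))) 0 (label_word n (\<pi>, \<phi>))"
  using fill_df_letter_Pos[OF zero_not_in_df, of "[]"] unfolding zeroed_df Der_def by simp

lemma length_Der: "length (Der n k (\<pi>, \<phi>)) = card (nonfixed n (\<pi>, \<phi>))"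
  using length_Pos_eq_count_zeroed[OF zero_not_in_df] count_label_word_zero
  unfolding zeroed_df Der_def by simp

lemma nth_Der_rank:
  assumes "t \<in> nonfixed n (\<pi>, \<phi>)"
  shows "Der n k (\<pi>, \<phi>) ! rank_in (nonfixed n (\<pi>, \<phi>)) t
      = int (rank_in (nonfixed n (\<pi>, \<phi>)) (\<pi> t)) + 1"
proof -
  have t: "t = Suc (t - 1)" "t - 1 < n" "\<phi> t = 0" using assms unfolding nonfixed_def by auto
  have "df n k (\<pi>, \<phi>) ! (t - 1) = Der n k (\<pi>, \<phi>) ! rank_in (nonfixed n (\<pi>, \<phi>)) t"
    using nth_fill[of "t - 1" "label_word n (\<pi>, \<phi>)" "df_letter (Der n k (\<pi>, \<phi>))" 0] t
      nth_label_word[OF t(2)] count_take_label_word[of "t - 1"]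
    by (simp add: df_eq_fill[symmetric] df_letter_def)
  then show ?thesis using nth_df[OF t(2)] t by simp
qed

lemma pf_eq_red_pos: "pf n k (\<pi>, \<phi>) = red_pos (map (\<lambda>i. if \<phi> i = 0 then int (\<pi> i)
    else if \<phi> i = - int k then int i else \<phi> i) [1..<n+1])"
  unfolding pf_def fst_conv snd_conv
  by (rule arg_cong[where f = red_pos], rule map_cong) (use label_eq_0_iff label_nonzero in auto)

lemma fill_pf_letter_eq_map_rank_code:
  "fill (pf_letter k (Der n k (\<pi>, \<phi>))) 0 (label_word n (\<pi>, \<phi>)) = map (rank_code (nonfixed n (\<pi>, \<phi>)))
     (map (\<lambda>i. if \<phi> i = 0 then int (\<pi> i) else if \<phi> i = - int k then int i else \<phi> i) [1..<n+1])"
proof (rule nth_equalityI)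
  fix j assume "j < length (fill (pf_letter k (Der n k (\<pi>, \<phi>))) 0 (label_word n (\<pi>, \<phi>)))"
  then have j: "j < n" by simp
  define C where "C = nonfixed n (\<pi>, \<phi>)"
  have lhs: "fill (pf_letter k (Der n k (\<pi>, \<phi>))) 0 (label_word n (\<pi>, \<phi>)) ! j
      = pf_letter k (Der n k (\<pi>, \<phi>)) (rank_in C (Suc j)) (\<phi> (Suc j))"
    using nth_fill[of j "label_word n (\<pi>, \<phi>)"] j count_take_label_word[of j n "(\<pi>, \<phi>)"]
    by (simp add: nth_label_word C_def)
  show "fill (pf_letter k (Der n k (\<pi>, \<phi>))) 0 (label_word n (\<pi>, \<phi>)) ! j
      = map (rank_code C) (map (\<lambda>i. if \<phi> i = 0 then int (\<pi> i)
          else if \<phi> i = - int k then int i else \<phi> i) [1..<n+1]) ! j"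
  proof (cases "\<phi> (Suc j) = 0")
    case True
    then have "Suc j \<in> C" using j unfolding C_def nonfixed_def by simp
    then show ?thesis
      using lhs True j nth_Der_rank permutation_nonfixed
      by (simp add: rank_code_def C_def nth_map_upt del: upt_Suc)
  next
    case False
    then have "Suc j \<notin> C" "\<phi> (Suc j) < 0" using label_range[of "Suc j"]
      unfolding C_def nonfixed_def by auto
    then show ?thesis
      using lhs False j
        by (auto simp: rank_code_def pf_letter_def nth_map_upt simp del: upt_Suc of_nat_Suc)
  qed
qed simp

lemma DES_eq_DES_fill: "DES n k (\<pi>, \<phi>)
    = DES_word (fill (pf_letter k (Der n k (\<pi>, \<phi>))) 0 (label_word n (\<pi>, \<phi>)))"
proof -
  define C where "C = nonfixed n (\<pi>, \<phi>)"
  define raw where "raw = map (\<lambda>i. if \<phi> i = 0 then int (\<pi> i)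
    else if \<phi> i = - int k then int i else \<phi> i) [1..<n+1]"
  have len: "length raw = n" unfolding raw_def by simp
  have fixed_letter: "raw ! j = int (Suc j)" if j: "j < n" "0 \<le> raw ! j" "nat (raw ! j) \<notin> C" for j
  proof -
    have raw_j: "raw ! j = (if \<phi> (Suc j) = 0 then int (\<pi> (Suc j))
        else if \<phi> (Suc j) = - int k then int (Suc j) else \<phi> (Suc j))"
      unfolding raw_def using j(1) by (simp add: nth_map_upt del: upt_Suc)
    have "\<phi> (Suc j) = 0 \<Longrightarrow> \<pi> (Suc j) \<in> C"
      using permutation_nonfixed[of "Suc j"] j(1) unfolding C_def nonfixed_def by simp
    then show ?thesis using raw_j j(2,3) label_range[of "Suc j"] by (auto split: if_splits)
  qed
  have "DES_word (map (rank_code C) raw) = DES_word raw"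
  proof (rule DES_word_map_mono)
    show "rank_code C x \<le> rank_code C y" if "x \<le> y" for x y
      using rank_code_mono[OF finite_nonfixed] that unfolding C_def by blast
    fix i assume i: "Suc i < length raw" "raw ! i > raw ! Suc i"
    have "raw ! Suc i < 0 \<or> nat (raw ! Suc i) \<in> C \<or> nat (raw ! i) \<in> C"
    proof (rule ccontr)
      assume "\<not> ?thesis"
      then have "raw ! i = int (Suc i)" "raw ! Suc i = int (Suc (Suc i))"
        using fixed_letter[of i] fixed_letter[of "Suc i"] i len by auto
      then show False using i(2) by simp
    qed
    then show "rank_code C (raw ! i) > rank_code C (raw ! Suc i)"
      using rank_code_strict_mono[OF finite_nonfixed] i(2) unfolding C_def by blast
  qed
  then show ?thesis
    unfolding DES_def pf_eq_red_pos DES_word_red_pos fill_pf_letter_eq_map_rank_code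
    by (simp add: raw_def C_def)
qed

lemma DEZ_eq_DES_fill: "DEZ n k (\<pi>, \<phi>)
    = DES_word (fill (df_letter (Der n k (\<pi>, \<phi>))) 0 (label_word n (\<pi>, \<phi>)))"
  unfolding DEZ_def using df_eq_fill by simp

lemma derangement_word_Der: "derangement_word (Der n k (\<pi>, \<phi>))"
proof -
  define C where "C = nonfixed n (\<pi>, \<phi>)"
  define D where "D = Der n k (\<pi>, \<phi>)"
  have fin: "finite C" unfolding C_def by (rule finite_nonfixed)
  have len: "length D = card C" unfolding D_def C_def by (rule length_Der)
  have idx: "\<exists>t\<in>C. j = rank_in C t" if "j < length D" for j
    using that rank_in_image[OF fin] len by (metis atLeast0LessThan imageE lessThan_iff)
  have nth: "D ! rank_in C t = int (rank_in C (\<pi> t)) + 1" "\<pi> t \<in> C" if "t \<in> C" for t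
    using nth_Der_rank permutation_nonfixed that unfolding C_def D_def by auto
  have "distinct D"
  proof (rule distinct_conv_nth[THEN iffD2], intro allI impI)
    fix i j assume ij: "i < length D" "j < length D" "i \<noteq> j"
    obtain t t' where t: "t \<in> C" "i = rank_in C t" "t' \<in> C" "j = rank_in C t'"
      using idx ij by blast
    then have "\<pi> t \<noteq> \<pi> t'" using ij(3) permutes_inj[OF arrangement_permutes] by (auto dest: injD)
    then have "rank_in C (\<pi> t) \<noteq> rank_in C (\<pi> t')"
      using inj_on_rank_in[OF fin] nth(2) t by (metis inj_on_eq_iff)
    then show "D ! i \<noteq> D ! j" using nth t by simp
  qed
  moreover have "set D = {1..int (length D)}"
  proof (rule card_subset_eq)
    show "set D \<subseteq> {1..int (length D)}"
      using idx nth rank_in_less_card[OF fin] len by (force simp: in_set_conv_nth)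
    show "card (set D) = card {1..int (length D)}" using \<open>distinct D\<close> by (simp add: distinct_card)
  qed simp
  moreover have "D ! j \<noteq> int (Suc j)" if j: "j < length D" for j
  proof -
    obtain t where t: "t \<in> C" "j = rank_in C t" using idx j by blast
    then have "rank_in C (\<pi> t) \<noteq> rank_in C t"
      using inj_on_rank_in[OF fin] nth(2) nonfixed_moved unfolding C_def by (metis inj_on_eq_iff)
    then show ?thesis using nth t by simp
  qed
  ultimately show ?thesis unfolding derangement_word_def D_def by blast
qed
end

lemma arrangement_eqI:
  assumes a: "(\<pi>, \<phi>) \<in> arrangements n k" and b: "(\<pi>', \<phi>') \<in> arrangements n k"
    and label: "label_word n (\<pi>, \<phi>) = label_word n (\<pi>', \<phi>')"
    and Der: "Der n k (\<pi>, \<phi>) = Der n k (\<pi>', \<phi>')"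
  shows "(\<pi>, \<phi>) = (\<pi>', \<phi>')"
proof -
  have "\<phi> t = \<phi>' t" for t
  proof (cases "t \<in> {1..n}")
    case True
    then have "t - 1 < n" "Suc (t - 1) = t" by auto
    then show ?thesis
      using nth_label_word[of "t - 1" n "(\<pi>, \<phi>)"] nth_label_word[of "t - 1" n "(\<pi>', \<phi>')"] label
      by simp
  qed (use label_outside[OF a] label_outside[OF b] in simp)
  then have \<phi>: "\<phi> = \<phi>'" by blast
  define C where "C = nonfixed n (\<pi>, \<phi>)"
  have C': "nonfixed n (\<pi>', \<phi>') = C" unfolding C_def nonfixed_def \<phi> by simp
  have "\<pi> t = \<pi>' t" for t
  proof (cases "t \<in> C")
    case True
    then have "rank_in C (\<pi> t) = rank_in C (\<pi>' t)"
      using nth_Der_rank[OF a] nth_Der_rank[OF b] Der C' unfolding C_def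
        by (metis add_right_cancel of_nat_eq_iff)
    moreover have "\<pi> t \<in> C" "\<pi>' t \<in> C"
      using permutation_nonfixed[OF a] permutation_nonfixed[OF b] True C' unfolding C_def by auto
    ultimately show ?thesis
      using inj_on_rank_in[OF finite_nonfixed[OF a]] unfolding C_def by (metis inj_on_eq_iff)
  next
    case False
    show ?thesis
    proof (cases "t \<in> {1..n}")
      case True
      then have "\<phi> t \<noteq> 0" using False unfolding C_def nonfixed_def by simp
      then show ?thesis using label_nonzero[OF a] label_nonzero[OF b] \<phi> by simp
    qed (use permutes_not_in[OF arrangement_permutes[OF a]]
        permutes_not_in[OF arrangement_permutes[OF b]] in simp)
  qed
  with \<phi> show ?thesis by auto
qed

lemma permutation_with_rank_word:
  assumes D: "derangement_word D" and fin: "finite C" and card: "card C = length D"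
  obtains \<pi> where "\<pi> permutes C" "\<And>t. t \<in> C \<Longrightarrow> \<pi> t \<noteq> t"
    "\<And>t. t \<in> C \<Longrightarrow> int (rank_in C (\<pi> t)) + 1 = D ! rank_in C t"
proof -
  have rank_bij: "bij_betw (rank_in C) C {0..<length D}"
    using inj_on_rank_in[OF fin] rank_in_image[OF fin] card unfolding bij_betw_def by simp
  define g where "g = the_inv_into C (rank_in C)"
  have g: "g j \<in> C" "rank_in C (g j) = j" if "j < length D" for j
    using that bij_betw_the_inv_into[OF rank_bij] f_the_inv_into_f_bij_betw[OF rank_bij]
    unfolding g_def by (auto simp: bij_betw_def)
  define e where "e t = nat (D ! rank_in C t) - 1" for t
  have e: "e t < length D" "int (e t) + 1 = D ! rank_in C t" "e t \<noteq> rank_in C t" if "t \<in> C" for t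
  proof -
    have j: "rank_in C t < length D" using rank_in_less_card[OF fin that] card by simp
    then have "D ! rank_in C t \<in> {1..int (length D)}" "D ! rank_in C t \<noteq> int (Suc (rank_in C t))"
      using D nth_mem[OF j] unfolding derangement_word_def by auto
    then show "e t < length D" "int (e t) + 1 = D ! rank_in C t" "e t \<noteq> rank_in C t"
      unfolding e_def by auto
  qed
  define \<pi> where "\<pi> t = (if t \<in> C then g (e t) else t)" for t
  have \<pi>C: "\<pi> t \<in> C" "rank_in C (\<pi> t) = e t" "\<pi> t \<noteq> t" if "t \<in> C" for t
    using g[OF e(1)[OF that]] e(3)[OF that] that unfolding \<pi>_def by auto
  have "inj_on \<pi> C"
  proof (rule inj_onI)
    fix s t assume st: "s \<in> C" "t \<in> C" "\<pi> s = \<pi> t"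
    then have "D ! rank_in C s = D ! rank_in C t" using \<pi>C(2) e(2) by metis
    moreover have "rank_in C s < length D" "rank_in C t < length D"
      using rank_in_less_card[OF fin] st card by auto
    ultimately have "rank_in C s = rank_in C t"
      using D unfolding derangement_word_def by (simp add: nth_eq_iff_index_eq)
    then show "s = t" using inj_on_rank_in[OF fin] st by (metis inj_on_eq_iff)
  qed
  then have "bij_betw \<pi> C C" using \<pi>C(1)
    by (simp add: bij_betw_def endo_inj_surj[OF fin] image_subsetI)
  then have "\<pi> permutes C" by (rule bij_imp_permutes) (simp add: \<pi>_def)
  then show ?thesis using that \<pi>C(2,3) e(2) by simp
qed

lemma arrangement_exists:
  assumes D: "derangement_word D"
    and w: "length w = n" "set w \<subseteq> {- int k..0}" "count_list w 0 = length D"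
  shows "\<exists>a\<in>arrangements n k. label_word n a = w \<and> Der n k a = D"
proof -
  define \<phi> where "\<phi> t = (if t \<in> {1..n} then w ! (t - 1) else 0)" for t
  define C where "C = {t \<in> {1..n}. \<phi> t = 0}"
  have label: "label_word n (\<pi>, \<phi>) = w" for \<pi>
    by (rule nth_equalityI) (use w(1) in \<open>auto simp: nth_label_word \<phi>_def\<close>)
  have nonfixed: "nonfixed n (\<pi>, \<phi>) = C" for \<pi> unfolding nonfixed_def C_def by simp
  have fin: "finite C" unfolding C_def by simp
  have card: "card C = length D"
    using count_label_word_zero[of n "(id, \<phi>)"] w(3) unfolding label nonfixed by simp
  obtain \<pi> where \<pi>: "\<pi> permutes C" "\<And>t. t \<in> C \<Longrightarrow> \<pi> t \<noteq> t"
    "\<And>t. t \<in> C \<Longrightarrow> int (rank_in C (\<pi> t)) + 1 = D ! rank_in C t"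
    using permutation_with_rank_word[OF D fin card] by blast
  have perm: "\<pi> permutes {1..n}" using permutes_subset[OF \<pi>(1)] unfolding C_def by blast
  have FIX: "FIX n \<pi> = {1..n} - C" unfolding FIX_def using \<pi>(2) permutes_not_in[OF \<pi>(1)] by auto
  have arr: "(\<pi>, \<phi>) \<in> arrangements n k"
    unfolding arrangements_def mem_Collect_eq case_prod_conv
  proof (intro conjI perm allI)
    fix i
    show "if i \<in> FIX n \<pi> then \<phi> i \<in> {- int k..-1} else \<phi> i = 0"
    proof (cases "i \<in> FIX n \<pi>")
      case True
      then have "i \<in> {1..n}" "\<phi> i \<noteq> 0" using FIX unfolding C_def by auto
      moreover have "w ! (i - 1) \<in> set w" using \<open>i \<in> {1..n}\<close> w(1) by auto
      ultimately show ?thesis using True w(2) unfolding \<phi>_def by auto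
    qed (use FIX in \<open>auto simp: C_def \<phi>_def\<close>)
  qed
  have "Der n k (\<pi>, \<phi>) = D"
  proof (rule nth_equalityI)
    show len: "length (Der n k (\<pi>, \<phi>)) = length D" using length_Der[OF arr] nonfixed card by simp
    fix j assume "j < length (Der n k (\<pi>, \<phi>))"
    then obtain t where t: "t \<in> C" "j = rank_in C t"
      using rank_in_image[OF fin] card len by (metis atLeast0LessThan imageE lessThan_iff)
    then show "Der n k (\<pi>, \<phi>) ! j = D ! j"
      using nth_Der_rank[OF arr] nonfixed \<pi>(3) permutes_in_image[OF \<pi>(1)] by simp
  qed
  then show ?thesis using arr label by blast
qed

lemma finite_arrangements: "finite (arrangements n k)"
proof (rule finite_subset)
  show "arrangements n k \<subseteq> {\<pi>. \<pi> permutes {1..n}}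
      \<times> {\<phi>. \<forall>i. (i \<in> {1..n} \<longrightarrow> \<phi> i \<in> {- int k..0}) \<and> (i \<notin> {1..n} \<longrightarrow> \<phi> i = 0)}"
    using arrangement_permutes label_range label_outside by fast
  show "finite \<dots>"
    by (intro finite_cartesian_product finite_permutations finite_set_of_finite_funs) auto
qed

lemma bij_betw_label_word:
  assumes "1 \<le> k" "derangement_word D"
  shows "bij_betw (label_word n) {a \<in> arrangements_m n k m. Der n k a = D} (words n k (length D) m)"
proof -
  have words: "label_word n a \<in> words n k (length D) m \<longleftrightarrow> (\<forall>i\<in>{1..k}. fixi n i a = m i)"
    if "a \<in> arrangements n k" "Der n k a = D" for a
  proof -
    obtain \<pi> \<phi> where a: "a = (\<pi>, \<phi>)" by fastforce
    have "set (label_word n a) \<subseteq> {- int k..0}"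
      using label_range[OF that(1)[unfolded a]] unfolding a label_word_def by auto
    moreover have "count_list (label_word n a) 0 = length D"
      using count_label_word_zero length_Der that unfolding a by metis
    ultimately show ?thesis
      using fixi_eq_count_label_word[OF that(1)[unfolded a]] unfolding a words_def by auto
  qed
  show ?thesis
  proof (rule bij_betw_imageI)
    show "inj_on (label_word n) {a \<in> arrangements_m n k m. Der n k a = D}"
    proof (rule inj_onI)
      fix a b assume "a \<in> {a \<in> arrangements_m n k m. Der n k a = D}"
        "b \<in> {a \<in> arrangements_m n k m. Der n k a = D}"
        "label_word n a = label_word n b"
      then show "a = b" using arrangement_eqI unfolding arrangements_m_def
        by (cases a, cases b) auto
    qed
    show "label_word n ` {a \<in> arrangements_m n k m. Der n k a = D} = words n k (length D) m"
    proof (intro equalityI subsetI)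
      fix w assume "w \<in> label_word n ` {a \<in> arrangements_m n k m. Der n k a = D}"
      then show "w \<in> words n k (length D) m" using words unfolding arrangements_m_def by auto
    next
      fix w assume w: "w \<in> words n k (length D) m"
      then obtain a where a: "a \<in> arrangements n k" "label_word n a = w" "Der n k a = D"
        using arrangement_exists[OF assms(2)] unfolding words_def by blast
      then have "a \<in> {a \<in> arrangements_m n k m. Der n k a = D}"
        using words[OF a(1,3)] w unfolding arrangements_m_def by simp
      then show "w \<in> label_word n ` {a \<in> arrangements_m n k m. Der n k a = D}"
        using a(2) by blast
    qed
  qed
qed

lemma card_DEZ_Der_fibre_eq:
  assumes "\<tau> permutes {1..k}" "1 \<le> n" "1 \<le> k"
  shows "card {a \<in> arrangements_m n k m. (DEZ n k a, Der n k a) = (S, D)}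
       = card {b \<in> arrangements_m n k (\<lambda>i. m (\<tau> i)). (DES n k b, Der n k b) = (S, D)}"
proof (cases "derangement_word D")
  case True
  interpret zero_filling k D by (rule zero_filling_if_derangement_word[OF assms(3) True])
  have DEZ: "DEZ n k a = DES_word (fill (df_letter D) 0 (label_word n a))"
    and DES: "DES n k a = DES_word (fill (pf_letter k D) 0 (label_word n a))"
    if "a \<in> arrangements n k" "Der n k a = D" for a
  proof -
    obtain \<pi> \<phi> where a: "a = (\<pi>, \<phi>)" by fastforce
    show "DEZ n k a = DES_word (fill (df_letter D) 0 (label_word n a))"
      using DEZ_eq_DES_fill[of \<pi> \<phi> n k] that unfolding a by simp
    show "DES n k a = DES_word (fill (pf_letter k D) 0 (label_word n a))"
      using DES_eq_DES_fill[of \<pi> \<phi> n k] that unfolding a by simp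
  qed
  have fibre: "{a \<in> arrangements_m n k m'. (F n k a, Der n k a) = (S, D)}
      = {a \<in> {a \<in> arrangements_m n k m'. Der n k a = D}. F n k a = S}" for F m' by auto
  have "bij_betw (label_word n) {a \<in> {a \<in> arrangements_m n k m. Der n k a = D}. DEZ n k a = S}
      {w \<in> words n k (length D) m. DES_word (fill (df_letter D) 0 w) = S}"
    by (rule bij_betw_restrict_Collect[OF bij_betw_label_word[OF assms(3) True]])
      (simp add: arrangements_m_def DEZ)
  moreover have "bij_betw (label_word n)
      {a \<in> {a \<in> arrangements_m n k (\<lambda>i. m (\<tau> i)). Der n k a = D}. DES n k a = S}
      {w \<in> words n k (length D) (\<lambda>i. m (\<tau> i)). DES_word (fill (pf_letter k D) 0 w) = S}"
    by (rule bij_betw_restrict_Collect[OF bij_betw_label_word[OF assms(3) True]])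
      (simp add: arrangements_m_def DES)
  ultimately show ?thesis
    unfolding fibre using card_words_DES_fill_eq[OF assms(1,2)] by (simp add: bij_betw_same_card)
next
  case False
  then have "Der n k a \<noteq> D" if "a \<in> arrangements n k" for a
    using derangement_word_Der that by (cases a) auto
  then have "{a \<in> arrangements_m n k m'. (F n k a, Der n k a) = (S, D)} = {}" for F m'
    unfolding arrangements_m_def by auto
  then show ?thesis by (simp only: card.empty)
qed

theorem theorem1p1:
  fixes n k :: nat and m :: "nat \<Rightarrow> nat" and \<tau> :: "nat \<Rightarrow> nat"
  assumes "1 \<le> n" and "1 \<le> k" and "\<tau> permutes {1..k}"
  shows "\<exists>\<Phi>. bij_betw \<Phi> (arrangements_m n k m) (arrangements_m n k (\<lambda>i. m (\<tau> i))) \<and>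
           (\<forall>a \<in> arrangements_m n k m.
               DEZ n k a = DES n k (\<Phi> a) \<and> Der n k a = Der n k (\<Phi> a))"
proof -
  have fin: "finite (arrangements_m n k m')" for m'
    by (rule finite_subset[OF _ finite_arrangements]) (auto simp: arrangements_m_def)
  have fibres: "card {a \<in> arrangements_m n k m. (DEZ n k a, Der n k a) = y}
      = card {b \<in> arrangements_m n k (\<lambda>i. m (\<tau> i)). (DES n k b, Der n k b) = y}" for y
    using card_DEZ_Der_fibre_eq[OF assms(3,1,2), of m "fst y" "snd y"] by simp
  obtain \<Phi> where "bij_betw \<Phi> (arrangements_m n k m) (arrangements_m n k (\<lambda>i. m (\<tau> i)))"
    "\<forall>a\<in>arrangements_m n k m. (DES n k (\<Phi> a), Der n k (\<Phi> a)) = (DEZ n k a, Der n k a)"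
    using bij_betw_if_card_fibres_eq[OF fin fin fibres] by blast
  then show ?thesis by (metis prod.inject)
qed

end
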